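(* Let $n,q,m\ge1$ and let $S=\{v_1,\dots,v_m\}\subset\mathbb Z^n$ consist of distinct vectors satisfying: (1) $\sum_jn_jv_j\ne0$ for all $n_j\in\mathbb Z$ with $\sum_jn_j=0$ and $1<\sum_j|n_j|\le 2q+2$; (2) $|\sum_jn_jv_j|^2-\sum_jn_j|v_j|^2\ne0$ for all $n_j\in\mathbb Z$ with $\sum_jn_j=1$ and $1<\sum_j|n_j|\le2q+1$; (3) $\pi(u)\ne0$ whenever $u\in\mathbb Z^m$ is an element of $X_q$ or the sum or the difference of two distinct elements of $X_q$; (4) $2\sum_j\ell_j|v_j|^2+|\sum_j\ell_jv_j|^2\ne0$ for all $\ell\in X_q^{-2}$. Substitute into $H_{\rm Res}$ (restricted to $\{u_k=0,\ k\notin\mathrm{Span}(S)\}$) $u_k=z_k$ for $k\in S^c$ and $u_{v_i}=\sqrt{\xi_i+y_i}\,e^{ix_i}$, and expand in powers of $y,w$ (with $y$ of degree 2, $w=(z,\bar z)$ of degree 1, $x$ of degree 0). Then the sum of all terms of degree $\le2$ in $(y,w)$ equals $$\mathrm{const}(\xi)+(q+1)^2A_q(\xi)\Big(\sum_iy_i+\sum_{k\in S^c}|z_k|^2\Big)+N,$$ where $$N=(\omega(\xi),y)+\sum_{k\in S^c}|k|^2|z_k|^2+\mathcal Q(x,w),\qquad \omega(\xi)=\omega_0+\nabla_\xi A_{q+1}(\xi)-(q+1)^2A_q(\xi)\underline1,$$ $\omega_0=(|v_1|^2,\dots,|v_m|^2)$, $\underline1=(1,\dots,1)$, and $$\mathcal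 Q=\sum_{\ell\in X_q^0}c(\ell)e^{i(\ell,x)}\sum_{(h,k)\in\mathcal P_\ell}z_h\bar z_k+\sum_{\ell\in X_q^{-2}}c(\ell)\sum_{\{h,k\}\in\mathcal P_\ell}\big[e^{i(\ell,x)}z_hz_k+e^{-i(\ell,x)}\bar z_h\bar z_k\big],$$ where, writing $\ell=\ell^+-\ell^-$ with $\ell^\pm\in\mathbb N^m$ of disjoint supports and using multi-index notation, $$c(\ell)=(q+1)^2\xi^{\frac{\ell^++\ell^-}{2}}\sum_{\alpha\in\mathbb N^m,\ |\alpha+\ell^+|_1=q}\binom{q}{\ell^++\alpha}\binom{q}{\ell^-+\alpha}\xi^\alpha\quad(\ell\in X_q^0),$$ $$c(\ell)=(q+1)q\,\xi^{\frac{\ell^++\ell^-}{2}}\sum_{\alpha\in\mathbb N^m,\ |\alpha+\ell^+|_1=q-1}\binom{q+1}{\ell^-+\alpha}\binom{q-1}{\ell^++\alpha}\xi^\alpha\quad(\ell\in X_q^{-2}).$$ In particular, all terms of degree exactly $1$ in $w$ vanish (so $S$ is complete).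
   Context: Setting: $H_{\rm Res}=\sum_{k\in\mathbb Z^n}|k|^2u_k\bar u_k+\sum\binom{q+1}{\alpha}\binom{q+1}{\beta}u^\alpha\bar u^\beta$, the second sum over multi-indices $\alpha,\beta:\mathbb Z^n\to\mathbb N$ with $|\alpha|=|\beta|=q+1$, $\sum_k(\alpha_k-\beta_k)k=0$ and $\sum_k(\alpha_k-\beta_k)|k|^2=0$; $\binom{q+1}{\alpha}$ is the multinomial coefficient and $u^\alpha=\prod_ku_k^{\alpha_k}$. $S^c=\mathrm{Span}(S)\setminus S$, with $\mathrm{Span}(S)$ the subgroup of $\mathbb Z^n$ generated by $S$. $A_r(\xi)=\sum_{k\in\mathbb N^m,\ \sum k_i=r}\binom{r}{k_1,\dots,k_m}^2\prod_i\xi_i^{k_i}$. $e_1,\dots,e_m$ standard basis of $\mathbb Z^m$; $\eta(\sum a_ie_i)=\sum a_i$; $\pi:\mathbb Z^m\to\mathbb Z^n$, $\pi(e_i)=v_i$. $X_q$ is the set of $\ell=\sum_{j=1}^{2q}\epsilon_je_{i_j}$ ($\epsilon_j=\pm1$, repetitions allowed) with $\ell\ne0$, $\ell\ne-2e_i$ for all $i$, $\eta(\ell)\in\{0,-2\}$; $X_q^0$, $X_q^{-2}$ are the parts with $\eta=0$, $\eta=-2$. For $\ell\in X_q^0$, $\mathcal P_\ell$ is the set of ordered pairs $(h,k)\in S^c\times S^c$ with $\sum_j\ell_jv_j+h-k=0$ and $\sum_j\ell_j|v_j|^2+|h|^2-|k|^2=0$; for $\ell\in X_q^{-2}$, $\mathcal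 P_\ell$ is the set of unordered pairs $\{h,k\}\subset S^c$ with $\sum_j\ell_jv_j+h+k=0$ and $\sum_j\ell_j|v_j|^2+|h|^2+|k|^2=0$. Here $\xi_i>0$ are parameters, $x\in\mathbb T^m$, $y\in\mathbb C^m$ small. *)

theory Defs
  imports "HOL-Analysis.Analysis"
begin

definition nsq :: "int^'n \<Rightarrow> int" where
  "nsq k = (\<Sum>j\<in>UNIV. (k$j)^2)"

definition multinom :: "nat \<Rightarrow> ('a \<Rightarrow> nat) \<Rightarrow> nat" where
  "multinom r k = fact r div (\<Prod>i\<in>{i. k i \<noteq> 0}. fact (k i))"

definition piZ :: "('m::finite \<Rightarrow> int^'n) \<Rightarrow> ('m \<Rightarrow> int) \<Rightarrow> int^'n" where
  "piZ v l = (\<Sum>i\<in>UNIV. l i *s v i)"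

definition spanS :: "('m::finite \<Rightarrow> int^'n) \<Rightarrow> (int^'n) set" where
  "spanS v = {piZ v c | c. True}"

definition Sc :: "('m::finite \<Rightarrow> int^'n) \<Rightarrow> (int^'n) set" where
  "Sc v = spanS v - range v"

definition eta :: "('m::finite \<Rightarrow> int) \<Rightarrow> int" where
  "eta l = (\<Sum>i\<in>UNIV. l i)"

definition Xq :: "nat \<Rightarrow> ('m::finite \<Rightarrow> int) set" where
  "Xq q = {l. (\<exists>idx::nat \<Rightarrow> 'm. \<exists>sg::nat \<Rightarrow> int.
              (\<forall>j<2*q. sg j = 1 \<or> sg j = -1) \<and>
              l = (\<lambda>i. \<Sum>j<2*q. if idx j = i then sg j else 0))
          \<and> l \<noteq> (\<lambda>i. 0)
          \<and> (\<forall>i. l \<noteq> (\<lambda>j. if j = i then -2 else 0))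
          \<and> (eta l = 0 \<or> eta l = -2)}"

definition Xq0 :: "nat \<Rightarrow> ('m::finite \<Rightarrow> int) set" where
  "Xq0 q = {l \<in> Xq q. eta l = 0}"

definition Xq2 :: "nat \<Rightarrow> ('m::finite \<Rightarrow> int) set" where
  "Xq2 q = {l \<in> Xq q. eta l = -2}"

definition wsq :: "('m::finite \<Rightarrow> int^'n) \<Rightarrow> ('m \<Rightarrow> int) \<Rightarrow> int" where
  "wsq v l = (\<Sum>j\<in>UNIV. l j * nsq (v j))"

definition P0 :: "('m::finite \<Rightarrow> int^'n) \<Rightarrow> ('m \<Rightarrow> int) \<Rightarrow> ((int^'n) \<times> (int^'n)) set" where
  "P0 v l = {(h,k). h \<in> Sc v \<and> k \<in> Sc v \<and> piZ v l + h - k = 0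
                  \<and> wsq v l + nsq h - nsq k = 0}"

text \<open>P_l for l in X_q^-2: unordered pairs {h,k} (h = k is impossible under hypothesis (4)).\<close>
definition P2 :: "('m::finite \<Rightarrow> int^'n) \<Rightarrow> ('m \<Rightarrow> int) \<Rightarrow> (int^'n) set set" where
  "P2 v l = {{h,k} | h k. h \<in> Sc v \<and> k \<in> Sc v \<and> h \<noteq> k \<and> piZ v l + h + k = 0
                  \<and> wsq v l + nsq h + nsq k = 0}"

definition Apoly :: "nat \<Rightarrow> ('m::finite \<Rightarrow> real) \<Rightarrow> real" where
  "Apoly r xi = (\<Sum>k\<in>{k::'m \<Rightarrow> nat. (\<Sum>i\<in>UNIV. k i) = r}.
                   (real (multinom r k))^2 * (\<Prod>i\<in>UNIV. xi i ^ k i))"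

definition posp :: "('m \<Rightarrow> int) \<Rightarrow> 'm \<Rightarrow> nat" where "posp l = (\<lambda>i. nat (l i))"
definition negp :: "('m \<Rightarrow> int) \<Rightarrow> 'm \<Rightarrow> nat" where "negp l = (\<lambda>i. nat (- l i))"

definition xihalf :: "('m::finite \<Rightarrow> real) \<Rightarrow> ('m \<Rightarrow> int) \<Rightarrow> real" where
  "xihalf xi l = (\<Prod>i\<in>UNIV. xi i powr (real (posp l i + negp l i) / 2))"

definition c0 :: "nat \<Rightarrow> ('m::finite \<Rightarrow> real) \<Rightarrow> ('m \<Rightarrow> int) \<Rightarrow> real" where
  "c0 q xi l = real ((q+1)^2) * xihalf xi l *
     (\<Sum>a\<in>{a::'m \<Rightarrow> nat. (\<Sum>i\<in>UNIV. a i + posp l i) = q}.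
        real (multinom q (\<lambda>i. posp l i + a i)) * real (multinom q (\<lambda>i. negp l i + a i))
        * (\<Prod>i\<in>UNIV. xi i ^ a i))"

definition c2 :: "nat \<Rightarrow> ('m::finite \<Rightarrow> real) \<Rightarrow> ('m \<Rightarrow> int) \<Rightarrow> real" where
  "c2 q xi l = real ((q+1)*q) * xihalf xi l *
     (\<Sum>a\<in>{a::'m \<Rightarrow> nat. (\<Sum>i\<in>UNIV. a i + posp l i) = q - 1}.
        real (multinom (q+1) (\<lambda>i. negp l i + a i)) * real (multinom (q-1) (\<lambda>i. posp l i + a i))
        * (\<Prod>i\<in>UNIV. xi i ^ a i))"

definition omega :: "nat \<Rightarrow> ('m::finite \<Rightarrow> int^'n) \<Rightarrow> ('m \<Rightarrow> real) \<Rightarrow> 'm \<Rightarrow> real" where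
  "omega q v xi i = real_of_int (nsq (v i)) + deriv (\<lambda>t. Apoly (q+1) (xi(i := t))) (xi i)
                    - real ((q+1)^2) * Apoly q xi"

definition RM :: "nat \<Rightarrow> (int^'n) set \<Rightarrow> (((int^'n) \<Rightarrow> nat) \<times> ((int^'n) \<Rightarrow> nat)) set" where
  "RM q F = {(a,b). (\<forall>k. k \<notin> F \<longrightarrow> a k = 0) \<and> (\<forall>k. k \<notin> F \<longrightarrow> b k = 0)
              \<and> sum a F = q+1 \<and> sum b F = q+1
              \<and> (\<Sum>k\<in>F. (int (a k) - int (b k)) *s k) = 0
              \<and> (\<Sum>k\<in>F. (int (a k) - int (b k)) * nsq k) = 0}"

text \<open>H_Res evaluated at (u, ubar) with u_k = ubar_k = 0 outside the finite set F;
  u and ubar are treated as independent variables.\<close>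
definition Hres :: "nat \<Rightarrow> (int^'n) set \<Rightarrow> (int^'n \<Rightarrow> complex) \<Rightarrow> (int^'n \<Rightarrow> complex) \<Rightarrow> complex" where
  "Hres q F u ub = (\<Sum>k\<in>F. of_int (nsq k) * u k * ub k)
     + (\<Sum>(a,b)\<in>RM q F. of_nat (multinom (q+1) a * multinom (q+1) b)
           * (\<Prod>k\<in>F. u k ^ a k) * (\<Prod>k\<in>F. ub k ^ b k))"

text \<open>The substitution, with scaling parameter e: y -> e^2 y, w -> e w.\<close>
definition usub :: "('m::finite \<Rightarrow> int^'n) \<Rightarrow> ('m \<Rightarrow> real) \<Rightarrow> ('m \<Rightarrow> real) \<Rightarrow> ('m \<Rightarrow> complex)
                    \<Rightarrow> (int^'n \<Rightarrow> complex) \<Rightarrow> complex \<Rightarrow> int^'n \<Rightarrow> complex" where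
  "usub v xi x y z e k = (if k \<in> range v
      then csqrt (of_real (xi (inv v k)) + e^2 * y (inv v k)) * cis (x (inv v k))
      else e * z k)"

definition ubsub :: "('m::finite \<Rightarrow> int^'n) \<Rightarrow> ('m \<Rightarrow> real) \<Rightarrow> ('m \<Rightarrow> real) \<Rightarrow> ('m \<Rightarrow> complex)
                    \<Rightarrow> (int^'n \<Rightarrow> complex) \<Rightarrow> complex \<Rightarrow> int^'n \<Rightarrow> complex" where
  "ubsub v xi x y z e k = (if k \<in> range v
      then csqrt (of_real (xi (inv v k)) + e^2 * y (inv v k)) * cis (- x (inv v k))
      else e * cnj (z k))"

definition Hsub :: "nat \<Rightarrow> ('m::finite \<Rightarrow> int^'n) \<Rightarrow> ('m \<Rightarrow> real) \<Rightarrow> ('m \<Rightarrow> real) \<Rightarrow> ('m \<Rightarrow> complex)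
                    \<Rightarrow> (int^'n \<Rightarrow> complex) \<Rightarrow> complex \<Rightarrow> complex" where
  "Hsub q v xi x y z e = Hres q (range v \<union> {k. z k \<noteq> 0}) (usub v xi x y z e) (ubsub v xi x y z e)"

definition lx :: "('m::finite \<Rightarrow> int) \<Rightarrow> ('m \<Rightarrow> real) \<Rightarrow> real" where
  "lx l x = (\<Sum>i\<in>UNIV. real_of_int (l i) * x i)"

text \<open>The quadratic form Q(x,w); sums over P_l restricted to the (finite) support of z,
  outside of which all terms vanish.\<close>
definition Qform :: "nat \<Rightarrow> ('m::finite \<Rightarrow> int^'n) \<Rightarrow> ('m \<Rightarrow> real) \<Rightarrow> ('m \<Rightarrow> real)
                      \<Rightarrow> (int^'n \<Rightarrow> complex) \<Rightarrow> complex" where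
  "Qform q v xi x z =
     (\<Sum>l\<in>Xq0 q. of_real (c0 q xi l) * cis (lx l x) *
        (\<Sum>(h,k)\<in>P0 v l \<inter> ({k. z k \<noteq> 0} \<times> {k. z k \<noteq> 0}). z h * cnj (z k)))
   + (\<Sum>l\<in>Xq2 q. of_real (c2 q xi l) *
        (\<Sum>p\<in>{p\<in>P2 v l. p \<subseteq> {k. z k \<noteq> 0}}.
            cis (lx l x) * (\<Prod>h\<in>p. z h) + cis (- lx l x) * (\<Prod>h\<in>p. cnj (z h))))"

end

theory Submission
  imports Defs
begin

text \<open>
  Proof plan.  \<open>f(e) = Hsub q v xi x y z e\<close> is \<open>H_Res\<close> after the substitution, with \<open>y\<close> scaled
  by \<open>e\<^sup>2\<close> and \<open>w\<close> by \<open>e\<close>; so the terms of degree \<open>\<le> 2\<close> are \<open>f 0 + f' 0 + f'' 0 / 2\<close>, and we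
  compute these three numbers.  Inside the locale \<open>truncation\<close> (one
  point \<open>(xi, x, y, z)\<close> of the theorem) it then shows:
  (a) each monomial of \<open>H_Res\<close>, indexed by a resonant pair \<open>(a,b)\<close>, is \<open>e\<^sup>d\<close> times a smooth
      factor, \<open>d\<close> its degree in \<open>z, z\<^sup>*\<close>;
  (b) by hypotheses (1), (2), (4), pairs of degree 0 are diagonal, there are none of degree 1
      (so \<open>f' 0 = 0\<close>), and pairs of degree 2 contain no square \<open>z_h\<^sup>2\<close>.
\<close>

section \<open>Second-order jets at the origin\<close>

definition has_jet2 :: "(complex \<Rightarrow> complex) \<Rightarrow> complex \<Rightarrow> complex \<Rightarrow> complex \<Rightarrow> bool" where
  "has_jet2 f a0 a1 a2 \<longleftrightarrow> (\<exists>f1 f2 r. r > 0 \<and>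
     (\<forall>e. norm e < r \<longrightarrow> (f has_field_derivative f1 e) (at e) \<and> (f1 has_field_derivative f2 e) (at e))
     \<and> f 0 = a0 \<and> f1 0 = a1 \<and> f2 0 = a2)"

lemma has_jet2_values:
  assumes "has_jet2 f a0 a1 a2"
  shows "f 0 = a0" "deriv f 0 = a1" "(deriv ^^ 2) f 0 = a2"
proof -
  obtain f1 f2 r where r: "r > 0"
    and d: "\<And>e. norm e < r \<Longrightarrow> (f has_field_derivative f1 e) (at e) \<and> (f1 has_field_derivative f2 e) (at e)"
    and val: "f 0 = a0" "f1 0 = a1" "f2 0 = a2"
    using assms unfolding has_jet2_def by blast
  show "f 0 = a0" by fact
  show "deriv f 0 = a1" using d[of 0] r val by (simp add: DERIV_imp_deriv)
  have near: "eventually (\<lambda>e. deriv f e = f1 e) (nhds 0)"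
    unfolding eventually_nhds
    by (rule exI[of _ "ball 0 r"]) (use r d in \<open>auto simp: DERIV_imp_deriv dist_norm\<close>)
  have "(deriv ^^ 2) f 0 = deriv (deriv f) 0" by (simp add: numeral_2_eq_2)
  also have "\<dots> = deriv f1 0" by (rule deriv_cong_ev[OF near refl])
  also have "\<dots> = a2" using d[of 0] r val by (simp add: DERIV_imp_deriv)
  finally show "(deriv ^^ 2) f 0 = a2" .
qed

lemma has_jet2_const: "has_jet2 (\<lambda>_. c) c 0 0"
  unfolding has_jet2_def by (intro exI[of _ "\<lambda>_. 0"] exI[of _ 1]) auto

lemma has_jet2_id: "has_jet2 (\<lambda>e. e) 0 1 0"
  unfolding has_jet2_def by (intro exI[of _ "\<lambda>_. 1"] exI[of _ "\<lambda>_. 0"] exI[of _ 1]) auto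

lemma has_jet2_add:
  assumes "has_jet2 f a0 a1 a2" "has_jet2 g b0 b1 b2"
  shows "has_jet2 (\<lambda>e. f e + g e) (a0 + b0) (a1 + b1) (a2 + b2)"
proof -
  obtain f1 f2 r where "r > 0"
    and "\<And>e. norm e < r \<Longrightarrow> (f has_field_derivative f1 e) (at e) \<and> (f1 has_field_derivative f2 e) (at e)"
    and "f 0 = a0" "f1 0 = a1" "f2 0 = a2"
    using assms(1) unfolding has_jet2_def by blast
  moreover obtain g1 g2 s where "s > 0"
    and "\<And>e. norm e < s \<Longrightarrow> (g has_field_derivative g1 e) (at e) \<and> (g1 has_field_derivative g2 e) (at e)"
    and "g 0 = b0" "g1 0 = b1" "g2 0 = b2"
    using assms(2) unfolding has_jet2_def by blast
  ultimately show ?thesis unfolding has_jet2_def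
    by (intro exI[of _ "\<lambda>e. f1 e + g1 e"] exI[of _ "\<lambda>e. f2 e + g2 e"] exI[of _ "min r s"])
      (auto intro!: derivative_eq_intros)
qed

lemma has_jet2_mult:
  assumes "has_jet2 f a0 a1 a2" "has_jet2 g b0 b1 b2"
  shows "has_jet2 (\<lambda>e. f e * g e) (a0 * b0) (a1 * b0 + a0 * b1) (a2 * b0 + 2 * a1 * b1 + a0 * b2)"
proof -
  obtain f1 f2 r where "r > 0"
    and "\<And>e. norm e < r \<Longrightarrow> (f has_field_derivative f1 e) (at e) \<and> (f1 has_field_derivative f2 e) (at e)"
    and "f 0 = a0" "f1 0 = a1" "f2 0 = a2"
    using assms(1) unfolding has_jet2_def by blast
  moreover obtain g1 g2 s where "s > 0"
    and "\<And>e. norm e < s \<Longrightarrow> (g has_field_derivative g1 e) (at e) \<and> (g1 has_field_derivative g2 e) (at e)"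
    and "g 0 = b0" "g1 0 = b1" "g2 0 = b2"
    using assms(2) unfolding has_jet2_def by blast
  ultimately show ?thesis unfolding has_jet2_def
    by (intro exI[of _ "\<lambda>e. f1 e * g e + f e * g1 e"] exI[of _ "\<lambda>e. f2 e * g e + 2 * f1 e * g1 e + f e * g2 e"]
        exI[of _ "min r s"])
      (auto intro!: derivative_eq_intros simp: algebra_simps)
qed

lemma has_jet2_sum:
  assumes "finite I" "\<And>i. i \<in> I \<Longrightarrow> has_jet2 (f i) (a0 i) (a1 i) (a2 i)"
  shows "has_jet2 (\<lambda>e. \<Sum>i\<in>I. f i e) (\<Sum>i\<in>I. a0 i) (\<Sum>i\<in>I. a1 i) (\<Sum>i\<in>I. a2 i)"
  using assms by (induction I rule: finite_induct) (auto intro: has_jet2_add simp: has_jet2_const[of 0, simplified])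

lemma has_jet2_prod_flat:
  assumes "finite I" "\<And>i. i \<in> I \<Longrightarrow> has_jet2 (f i) (a i) 0 (c i)"
  shows "has_jet2 (\<lambda>e. \<Prod>i\<in>I. f i e) (\<Prod>i\<in>I. a i) 0 (\<Sum>i\<in>I. c i * (\<Prod>j\<in>I-{i}. a j))"
  using assms
proof (induction I rule: finite_induct)
  case empty
  then show ?case using has_jet2_const[of 1] by simp
next
  case (insert k I)
  have rest: "(\<Sum>i\<in>I. c i * (\<Prod>j\<in>insert k I-{i}. a j)) = a k * (\<Sum>i\<in>I. c i * (\<Prod>j\<in>I-{i}. a j))"
  proof -
    have "(\<Prod>j\<in>insert k I-{i}. a j) = a k * (\<Prod>j\<in>I-{i}. a j)" if "i \<in> I" for i
    proof -
      have "insert k I - {i} = insert k (I - {i})" using insert that by auto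
      then show ?thesis using insert by simp
    qed
    then show ?thesis by (simp add: sum_distrib_left mult_ac)
  qed
  show ?case
    using has_jet2_mult[OF insert(4)[of k] insert(3)] insert rest by simp
qed

lemma has_jet2_power_flat:
  assumes "has_jet2 f a 0 c"
  shows "has_jet2 (\<lambda>e. f e ^ n) (a ^ n) 0 (of_nat n * a ^ (n - 1) * c)"
proof (induction n)
  case 0
  then show ?case using has_jet2_const[of 1] by simp
next
  case (Suc n)
  have "c * a ^ n + a * (of_nat n * a ^ (n - 1) * c) = of_nat (Suc n) * a ^ n * c"
    by (cases n) (auto simp: algebra_simps)
  then show ?case using has_jet2_mult[OF assms Suc] by simp
qed

lemma has_jet2_monomial:
  "has_jet2 (\<lambda>e. e ^ n) (if n = 0 then 1 else 0) (if n = 1 then 1 else 0) (if n = 2 then 2 else 0)"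
proof (induction n)
  case 0
  then show ?case using has_jet2_const[of 1] by simp
next
  case (Suc n)
  show ?case using has_jet2_mult[OF has_jet2_id Suc] by (auto simp: numeral_2_eq_2)
qed

definition smooth2 :: "(complex \<Rightarrow> complex) \<Rightarrow> bool" where
  "smooth2 f \<longleftrightarrow> (\<exists>a0 a1 a2. has_jet2 f a0 a1 a2)"

lemma smooth2_const: "smooth2 (\<lambda>_. c)"
  unfolding smooth2_def using has_jet2_const by blast

lemma smooth2_mult: "smooth2 f \<Longrightarrow> smooth2 g \<Longrightarrow> smooth2 (\<lambda>e. f e * g e)"
  unfolding smooth2_def using has_jet2_mult by blast

lemma smooth2_power: "smooth2 f \<Longrightarrow> smooth2 (\<lambda>e. f e ^ n)"
  by (induction n) (auto intro: smooth2_const smooth2_mult)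

lemma smooth2_prod: "finite I \<Longrightarrow> (\<And>i. i \<in> I \<Longrightarrow> smooth2 (f i)) \<Longrightarrow> smooth2 (\<lambda>e. \<Prod>i\<in>I. f i e)"
  by (induction I rule: finite_induct) (auto intro: smooth2_const smooth2_mult)

lemma has_jet2_action: "has_jet2 (\<lambda>e. c + e\<^sup>2 * y) c 0 (2 * y)"
  using has_jet2_add[OF has_jet2_const[of c] has_jet2_mult[OF has_jet2_monomial[of 2] has_jet2_const[of y]]]
  by simp

lemma has_jet2_high_order:
  assumes "smooth2 G" "2 \<le> d"
  shows "has_jet2 (\<lambda>e. c * e ^ d * G e) 0 0 (if d = 2 then 2 * c * G 0 else 0)"
proof -
  obtain g0 g1 g2 where G: "has_jet2 G g0 g1 g2" using assms(1) unfolding smooth2_def by blast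
  have "G 0 = g0" using has_jet2_values(1)[OF G] .
  then show ?thesis
    using has_jet2_mult[OF has_jet2_mult[OF has_jet2_const[of c] has_jet2_monomial[of d]] G] assms(2)
    by (auto simp: mult_ac)
qed

text \<open>The substituted amplitude \<open>csqrt (xi + e\<^sup>2 y)\<close> is smooth as long as \<open>|y| < xi\<close>, because
  then \<open>xi + e\<^sup>2 y\<close> stays in the right half plane for \<open>|e| < 1\<close>.\<close>
lemma smooth2_csqrt:
  fixes xi :: real
  assumes "xi > 0" "norm y < xi"
  shows "smooth2 (\<lambda>e. csqrt (of_real xi + e\<^sup>2 * y))"
proof -
  define w where "w e = of_real xi + e\<^sup>2 * y" for e
  have off_cut: "w e \<notin> \<real>\<^sub>\<le>\<^sub>0" if "norm e < 1" for e
  proof -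
    have "norm (e\<^sup>2 * y) \<le> norm y"
      using that by (simp add: norm_mult norm_power power_le_one mult_left_le_one_le)
    then have "Re (e\<^sup>2 * y) > - xi" using assms abs_Re_le_cmod[of "e\<^sup>2 * y"] by linarith
    then have "Re (w e) > 0" unfolding w_def by simp
    then show ?thesis by (auto simp: complex_nonpos_Reals_iff)
  qed
  define g1 where "g1 e = (2 * e * y) / (2 * csqrt (w e))" for e
  have d1: "((\<lambda>e. csqrt (w e)) has_field_derivative g1 e) (at e)" if "norm e < 1" for e
    unfolding g1_def using off_cut[OF that] unfolding w_def
    by (auto intro!: derivative_eq_intros simp: power2_eq_square)
  have d2: "(g1 has_field_derivative deriv g1 e) (at e)" if "norm e < 1" for e
  proof -
    have "csqrt (w e) \<noteq> 0" using off_cut[OF that] by auto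
    moreover have "(\<lambda>e. csqrt (w e)) field_differentiable at e"
      using d1[OF that] field_differentiable_def by blast
    ultimately have "g1 field_differentiable at e"
      unfolding g1_def by (auto intro!: derivative_intros)
    then show ?thesis using DERIV_deriv_iff_field_differentiable by blast
  qed
  show ?thesis unfolding smooth2_def has_jet2_def w_def[symmetric]
    by (rule exI, rule exI, rule exI, rule exI[of _ g1], rule exI[of _ "deriv g1"], rule exI[of _ 1])
      (use d1 d2 in auto)
qed

lemma finite_funs_into: "finite S \<Longrightarrow> finite {f::'m::finite \<Rightarrow> 'b. \<forall>i. f i \<in> S}"
proof -
  assume "finite S"
  have "{f::'m \<Rightarrow> 'b. \<forall>i. f i \<in> S} = PiE UNIV (\<lambda>_. S)" by (auto simp: PiE_UNIV_domain)
  then show ?thesis using \<open>finite S\<close> by (simp add: finite_PiE)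
qed

lemma finite_bounded_multi_indices: "finite {a::'m::finite \<Rightarrow> nat. \<forall>i. a i \<le> N}"
  using finite_funs_into[of "{..N}"] by simp

lemma finite_bounded_supported:
  assumes "finite F"
  shows "finite {a::'k \<Rightarrow> nat. (\<forall>k. k \<notin> F \<longrightarrow> a k = 0) \<and> (\<forall>k. a k \<le> N)}"
proof (rule inj_on_finite[where f="\<lambda>a. restrict a F" and B="PiE F (\<lambda>_. {..N})"])
  show "inj_on (\<lambda>a. restrict a F) {a. (\<forall>k. k \<notin> F \<longrightarrow> a k = 0) \<and> (\<forall>k. a k \<le> N)}"
  proof (rule inj_onI)
    fix a b assume a: "a \<in> {a. (\<forall>k. k \<notin> F \<longrightarrow> a k = 0) \<and> (\<forall>k. a k \<le> N)}"
      and b: "b \<in> {a. (\<forall>k. k \<notin> F \<longrightarrow> a k = 0) \<and> (\<forall>k. a k \<le> N)}"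
      and eq: "restrict a F = restrict b F"
    show "a = b"
    proof
      fix k show "a k = b k"
        using a b fun_cong[OF eq, of k] by (cases "k \<in> F") auto
    qed
  qed
  show "(\<lambda>a. restrict a F) ` {a. (\<forall>k. k \<notin> F \<longrightarrow> a k = 0) \<and> (\<forall>k. a k \<le> N)} \<subseteq> PiE F (\<lambda>_. {..N})"
    by auto
  show "finite (PiE F (\<lambda>_. {..N}))" using assms by (simp add: finite_PiE)
qed

lemma finite_RM:
  fixes F :: "(int^'n) set"
  assumes "finite F"
  shows "finite (RM q F)"
proof (rule finite_subset)
  let ?S = "{a::int^'n \<Rightarrow> nat. (\<forall>k. k \<notin> F \<longrightarrow> a k = 0) \<and> (\<forall>k. a k \<le> q+1)}"
  have bound: "c k \<le> Suc q" if "\<forall>k. k \<notin> F \<longrightarrow> c k = 0" "sum c F = Suc q" for c :: "int^'n \<Rightarrow> nat" and k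
    using that member_le_sum[of k F c] assms by (cases "k \<in> F") auto
  show "RM q F \<subseteq> ?S \<times> ?S"
    by (auto simp: RM_def intro: bound)
  show "finite (?S \<times> ?S)" using finite_bounded_supported[OF assms] by blast
qed

text \<open>Swapping the two multi-indices of a resonant pair gives a resonant pair (this is
  complex conjugation of the corresponding monomial).\<close>
lemma RM_swap: "(b, a) \<in> RM q F \<longleftrightarrow> (a, b) \<in> RM q F"
proof -
  have "(\<Sum>k\<in>F. (int (b k) - int (a k)) *s k) = - (\<Sum>k\<in>F. (int (a k) - int (b k)) *s k)"
    by (simp add: sum_negf[symmetric] vec_eq_iff algebra_simps)
  moreover have "(\<Sum>k\<in>F. (int (b k) - int (a k)) * nsq k) = - (\<Sum>k\<in>F. (int (a k) - int (b k)) * nsq k)"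
    by (simp add: sum_negf[symmetric] algebra_simps)
  ultimately show ?thesis unfolding RM_def by auto
qed

lemma signed_unit_sum:
  fixes \<alpha> \<beta> :: "'m::finite \<Rightarrow> nat"
  assumes "(\<Sum>i\<in>UNIV. \<alpha> i) + (\<Sum>i\<in>UNIV. \<beta> i) = N"
  shows "\<exists>idx::nat\<Rightarrow>'m. \<exists>sg::nat\<Rightarrow>int. (\<forall>j<N. sg j = 1 \<or> sg j = -1) \<and>
     (\<lambda>i. int (\<alpha> i) - int (\<beta> i)) = (\<lambda>i. \<Sum>j<N. if idx j = i then sg j else 0)"
  using assms
proof (induction N arbitrary: \<alpha> \<beta>)
  case 0
  then show ?case by auto
next
  case (Suc M)
  obtain i0 s \<alpha>' \<beta>' where step: "s = 1 \<or> s = -1" "(\<Sum>i\<in>UNIV. \<alpha>' i) + (\<Sum>i\<in>UNIV. \<beta>' i) = M"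
    "\<And>i. int (\<alpha> i) - int (\<beta> i) = int (\<alpha>' i) - int (\<beta>' i) + (if i = i0 then s else 0)"
  proof (cases "\<exists>i0. \<alpha> i0 > 0")
    case True
    then obtain i0 where i0: "\<alpha> i0 > 0" by blast
    define \<alpha>' where "\<alpha>' i = (if i = i0 then \<alpha> i - 1 else \<alpha> i)" for i
    have "\<alpha> i = \<alpha>' i + (if i = i0 then 1 else 0)" for i using i0 by (auto simp: \<alpha>'_def)
    then have "(\<Sum>i\<in>UNIV. \<alpha> i) = (\<Sum>i\<in>UNIV. \<alpha>' i) + 1" "\<And>i. int (\<alpha> i) = int (\<alpha>' i) + (if i = i0 then 1 else 0)"
      by (auto simp: sum.distrib)
    then show ?thesis using Suc.prems by (intro that[of 1 \<alpha>' \<beta> i0]) simp_all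
  next
    case False
    then have "(\<Sum>i\<in>UNIV. \<beta> i) = Suc M" using Suc.prems by simp
    then obtain i0 where i0: "\<beta> i0 > 0" by (metis gr0I sum.neutral nat.simps(3))
    define \<beta>' where "\<beta>' i = (if i = i0 then \<beta> i - 1 else \<beta> i)" for i
    have "\<beta> i = \<beta>' i + (if i = i0 then 1 else 0)" for i using i0 by (auto simp: \<beta>'_def)
    then have "(\<Sum>i\<in>UNIV. \<beta> i) = (\<Sum>i\<in>UNIV. \<beta>' i) + 1" "\<And>i. int (\<beta> i) = int (\<beta>' i) + (if i = i0 then 1 else 0)"
      by (auto simp: sum.distrib)
    then show ?thesis using Suc.prems by (intro that[of "-1" \<alpha> \<beta>' i0]) simp_all
  qed
  from Suc.IH[OF step(2)] obtain idx sg where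
    sg: "\<forall>j<M. sg j = 1 \<or> sg j = -1" and rep: "(\<lambda>i. int (\<alpha>' i) - int (\<beta>' i)) = (\<lambda>i. \<Sum>j<M. if idx j = i then sg j else 0)"
    by blast
  show ?case
  proof (intro exI conjI)
    show "\<forall>j<Suc M. (sg(M := s)) j = 1 \<or> (sg(M := s)) j = -1" using sg step(1) by (auto simp: less_Suc_eq)
    have "(\<Sum>j<M. if (idx(M := i0)) j = i then (sg(M := s)) j else 0) = (\<Sum>j<M. if idx j = i then sg j else 0)" for i
      by (rule sum.cong) auto
    then show "(\<lambda>i. int (\<alpha> i) - int (\<beta> i)) = (\<lambda>i. \<Sum>j<Suc M. if (idx(M := i0)) j = i then (sg(M := s)) j else 0)"
      using rep step(3) by (auto simp: fun_eq_iff)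
  qed
qed

text \<open>\<open>X_q\<close> is finite: its entries lie in \<open>[-2q, 2q]\<close>.\<close>
lemma finite_Xq: "finite (Xq q :: ('m::finite \<Rightarrow> int) set)"
proof (rule finite_subset)
  show "Xq q \<subseteq> {f::'m \<Rightarrow> int. \<forall>i. f i \<in> {-int (2*q)..int (2*q)}}"
  proof
    fix l :: "'m \<Rightarrow> int" assume "l \<in> Xq q"
    then obtain idx sg where sg: "\<forall>j<2*q. sg j = 1 \<or> sg j = -1"
      and l: "l = (\<lambda>i. \<Sum>j<2*q. if idx j = i then sg j else 0)"
      unfolding Xq_def by blast
    have "\<bar>l i\<bar> \<le> int (2*q)" for i
    proof -
      have "\<bar>l i\<bar> \<le> (\<Sum>j<2*q. \<bar>if idx j = i then sg j else 0\<bar>)" unfolding l by (rule sum_abs)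
      also have "\<dots> \<le> (\<Sum>j<2*q. 1)" by (rule sum_mono) (use sg in auto)
      finally show ?thesis by simp
    qed
    then show "l \<in> {f::'m \<Rightarrow> int. \<forall>i. f i \<in> {-int (2*q)..int (2*q)}}"
      by (simp add: abs_le_iff) (meson minus_le_iff)
  qed
  show "finite {f::'m \<Rightarrow> int. \<forall>i. f i \<in> {-int (2*q)..int (2*q)}}" by (rule finite_funs_into) simp
qed

lemma eta_diff: "eta (\<lambda>i. int (\<alpha> i) - int (\<beta> i)) = int (sum \<alpha> UNIV) - int (sum \<beta> UNIV)"
  unfolding eta_def by (simp add: sum_subtractf)

lemma eta_single: "eta (\<lambda>j. if j = i then c else 0) = c"
  unfolding eta_def by simp

lemma in_Xq:
  fixes \<alpha> \<beta> :: "'m::finite \<Rightarrow> nat"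
  assumes "sum \<alpha> UNIV + sum \<beta> UNIV = 2*q" "l = (\<lambda>i. int (\<alpha> i) - int (\<beta> i))"
    "l \<noteq> (\<lambda>i. 0)" "\<forall>i. l \<noteq> (\<lambda>j. if j = i then -2 else 0)" "eta l = 0 \<or> eta l = -2"
  shows "l \<in> Xq q"
  using signed_unit_sum[OF assms(1)] assms(2-5) unfolding Xq_def by auto

lemma posp_negp_min:
  assumes "l = (\<lambda>i. int (\<alpha> i) - int (\<beta> i))"
  shows "(\<lambda>i. posp l i + min (\<alpha> i) (\<beta> i)) = \<alpha>" "(\<lambda>i. negp l i + min (\<alpha> i) (\<beta> i)) = \<beta>"
  using assms by (auto simp: posp_def negp_def fun_eq_iff)

lemma posp_negp_shift: "(\<lambda>i. int (posp l i + a i) - int (negp l i + a i)) = l"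
  by (auto simp: posp_def negp_def fun_eq_iff)

lemma sum_min_posp:
  assumes "l = (\<lambda>i. int (\<alpha> i) - int (\<beta> i))"
  shows "(\<Sum>i\<in>UNIV. min (\<alpha> i) (\<beta> i) + posp l i) = sum \<alpha> UNIV"
  using assms by (intro sum.cong) (auto simp: posp_def)

lemma sum_negp_shift:
  "int (sum (\<lambda>i. negp l i + a i) UNIV) = int (sum (\<lambda>i. posp l i + a i) UNIV) - eta l"
proof -
  have "eta l = (\<Sum>i\<in>UNIV. int (posp l i + a i) - int (negp l i + a i))"
    unfolding eta_def by (rule sum.cong) (auto simp: posp_def negp_def)
  then show ?thesis by (simp add: sum_subtractf sum.distrib)
qed

definition multinom_denom :: "('a \<Rightarrow> nat) \<Rightarrow> nat" where
  "multinom_denom a = (\<Prod>i\<in>{i. a i \<noteq> 0}. fact (a i))"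

lemma multinom_eq_div: "multinom r a = fact r div multinom_denom a"
  by (simp add: multinom_def multinom_denom_def)

text \<open>Multinomial coefficients are integers: \<open>\<Prod> \<alpha>_i!\<close> divides \<open>|\<alpha>|!\<close>.\<close>
lemma multinom_denom_dvd:
  "multinom_denom (\<alpha>::'m::finite \<Rightarrow> nat) dvd fact (\<Sum>i\<in>UNIV. \<alpha> i)"
proof -
  have "(\<Prod>i\<in>A. fact (\<alpha> i) :: nat) dvd fact (\<Sum>i\<in>A. \<alpha> i)" if "finite A" for A
    using that
  proof (induction A rule: finite_induct)
    case (insert k A)
    have "fact (\<alpha> k) * fact (\<Sum>i\<in>A. \<alpha> i) dvd (fact (\<alpha> k + (\<Sum>i\<in>A. \<alpha> i)) :: nat)"
      using binomial_fact_lemma[of "\<alpha> k" "\<alpha> k + (\<Sum>i\<in>A. \<alpha> i)"] by (metis add_diff_cancel_left' dvd_triv_left le_add1)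
    moreover have "fact (\<alpha> k) * (\<Prod>i\<in>A. fact (\<alpha> i)) dvd fact (\<alpha> k) * (fact (\<Sum>i\<in>A. \<alpha> i) :: nat)"
      using insert by simp
    ultimately show ?case using insert by (auto intro: dvd_trans)
  qed simp
  moreover have "multinom_denom \<alpha> = (\<Prod>i\<in>UNIV. fact (\<alpha> i))"
    unfolding multinom_denom_def by (rule prod.mono_neutral_left) auto
  ultimately show ?thesis by simp
qed

lemma multinom_Suc:
  fixes \<alpha> :: "'m::finite \<Rightarrow> nat"
  assumes "sum \<alpha> UNIV \<le> n"
  shows "multinom (Suc n) \<alpha> = Suc n * multinom n \<alpha>"
proof -
  have "multinom_denom \<alpha> dvd fact n"
    using multinom_denom_dvd[of \<alpha>] fact_dvd[OF assms] by (auto intro: dvd_trans)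
  then have "(Suc n * fact n) div multinom_denom \<alpha> = Suc n * (fact n div multinom_denom \<alpha>)"
    by (rule div_mult_swap[symmetric])
  then show ?thesis by (simp add: multinom_eq_div)
qed

lemma l1_le_1_sum_0:
  fixes n :: "'m::finite \<Rightarrow> int"
  assumes "(\<Sum>i\<in>UNIV. n i) = 0" "(\<Sum>i\<in>UNIV. \<bar>n i\<bar>) \<le> 1"
  shows "n = (\<lambda>_. 0)"
proof (rule ccontr)
  assume "n \<noteq> (\<lambda>_. 0)"
  then obtain i0 where i0: "n i0 \<noteq> 0" by auto
  have "(\<Sum>i\<in>UNIV. \<bar>n i\<bar>) = \<bar>n i0\<bar> + (\<Sum>i\<in>UNIV-{i0}. \<bar>n i\<bar>)" by (simp add: sum.remove)
  moreover have "(\<Sum>i\<in>UNIV-{i0}. \<bar>n i\<bar>) \<ge> 0" by (rule sum_nonneg) auto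
  ultimately have "(\<Sum>i\<in>UNIV-{i0}. \<bar>n i\<bar>) = 0" using assms(2) i0 by linarith
  then have "(\<Sum>i\<in>UNIV-{i0}. n i) = 0" by (subst (asm) sum_nonneg_eq_0_iff) auto
  moreover have "(\<Sum>i\<in>UNIV. n i) = n i0 + (\<Sum>i\<in>UNIV-{i0}. n i)" by (simp add: sum.remove)
  ultimately show False using assms(1) i0 by simp
qed

lemma l1_le_1_sum_1:
  fixes n :: "'m::finite \<Rightarrow> int"
  assumes "(\<Sum>i\<in>UNIV. n i) = 1" "(\<Sum>i\<in>UNIV. \<bar>n i\<bar>) \<le> 1"
  shows "\<exists>j. n = (\<lambda>i. if i = j then 1 else 0)"
proof -
  obtain i0 where i0: "n i0 \<noteq> 0" using assms(1) by (metis (mono_tags) sum.neutral zero_neq_one)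
  have "(\<Sum>i\<in>UNIV. \<bar>n i\<bar>) = \<bar>n i0\<bar> + (\<Sum>i\<in>UNIV-{i0}. \<bar>n i\<bar>)" by (simp add: sum.remove)
  moreover have "(\<Sum>i\<in>UNIV-{i0}. \<bar>n i\<bar>) \<ge> 0" by (rule sum_nonneg) auto
  ultimately have "(\<Sum>i\<in>UNIV-{i0}. \<bar>n i\<bar>) = 0" using assms(2) i0 by linarith
  then have rest: "\<forall>i\<in>UNIV-{i0}. n i = 0" by (subst (asm) sum_nonneg_eq_0_iff) auto
  then have "(\<Sum>i\<in>UNIV. n i) = n i0" by (simp add: sum.remove[of UNIV i0])
  then show ?thesis using rest assms(1) by (intro exI[of _ i0]) auto
qed

lemma l1_diff_le:
  fixes \<alpha> \<beta> :: "'m::finite \<Rightarrow> nat"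
  shows "(\<Sum>i\<in>UNIV. \<bar>int (\<alpha> i) - int (\<beta> i)\<bar>) \<le> int (\<Sum>i\<in>UNIV. \<alpha> i) + int (\<Sum>i\<in>UNIV. \<beta> i)"
proof -
  have "(\<Sum>i\<in>UNIV. \<bar>int (\<alpha> i) - int (\<beta> i)\<bar>) \<le> (\<Sum>i\<in>UNIV. int (\<alpha> i) + int (\<beta> i))"
    by (rule sum_mono) auto
  then show ?thesis by (simp add: sum.distrib)
qed

lemma nsq_scale: "nsq (c *s h) = c\<^sup>2 * nsq h"
  unfolding nsq_def by (simp add: sum_distrib_left power_mult_distrib)

lemma nsq_parallelogram: "2 * (nsq h + nsq k) = nsq (h + k) + nsq (h - k)"
  unfolding nsq_def by (simp add: sum_distrib_left sum.distrib[symmetric] algebra_simps power2_eq_square)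

lemma nsq_eq_0: "nsq h = 0 \<Longrightarrow> h = 0"
  unfolding nsq_def by (subst (asm) sum_nonneg_eq_0_iff) (auto simp: vec_eq_iff)

lemma piZ_single: "piZ v (\<lambda>j. if j = i then c else 0) = c *s v i"
proof -
  have "piZ v (\<lambda>j. if j = i then c else 0) = (\<Sum>j\<in>UNIV. if j = i then c *s v j else 0)"
    unfolding piZ_def by (rule sum.cong) auto
  then show ?thesis by simp
qed

lemma wsq_single: "wsq v (\<lambda>j. if j = i then c else 0) = c * nsq (v i)"
proof -
  have "wsq v (\<lambda>j. if j = i then c else 0) = (\<Sum>j\<in>UNIV. if j = i then c * nsq (v j) else 0)"
    unfolding wsq_def by (rule sum.cong) auto
  then show ?thesis by simp
qed

lemma piZ_zero: "piZ v (\<lambda>i. 0) = 0"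
  by (simp add: piZ_def)

lemma wsq_zero: "wsq v (\<lambda>i. 0) = 0"
  by (simp add: wsq_def)

lemma piZ_uminus: "piZ v (\<lambda>i. - l i) = - piZ v l"
  unfolding piZ_def by (simp add: sum_negf[symmetric] vec_eq_iff)

lemma wsq_uminus: "wsq v (\<lambda>i. - l i) = - wsq v l"
  unfolding wsq_def by (simp add: sum_negf)

text \<open>Two resonance-type identities force \<open>l \<noteq> -2 e_i\<close>: otherwise \<open>h + k = 2 v_i\<close> and
  \<open>|h|\<^sup>2 + |k|\<^sup>2 = 2 |v_i|\<^sup>2\<close>, whence \<open>h = k\<close> by the parallelogram law.\<close>
lemma not_minus_two_unit:
  assumes "h \<noteq> k" "piZ v l + h + k = 0" "wsq v l + nsq h + nsq k = 0"
  shows "l \<noteq> (\<lambda>j. if j = i then -2 else 0)"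
proof
  assume l: "l = (\<lambda>j. if j = i then -2 else 0)"
  then have "h + k = 2 *s v i" using assms(2) piZ_single[of v i "-2"] by (simp add: vec_eq_iff algebra_simps)
  then have "nsq (h + k) = 4 * nsq (v i)" by (simp add: nsq_scale)
  moreover have "nsq h + nsq k = 2 * nsq (v i)" using assms(3) l wsq_single[of v i "-2"] by simp
  ultimately have "nsq (h - k) = 0" using nsq_parallelogram[of h k] by simp
  then show False using nsq_eq_0 assms(1) by fastforce
qed

lemma prod_cis: "finite A \<Longrightarrow> (\<Prod>i\<in>A. cis (f i)) = cis (\<Sum>i\<in>A. f i)"
  by (induction A rule: finite_induct) (auto simp: cis_mult)

lemma sqrt_power_split: "t > 0 \<Longrightarrow> sqrt t ^ (m + 2 * a) = t powr (real m / 2) * t ^ a"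
proof -
  assume t: "t > 0"
  have "sqrt t ^ m = (t powr (1/2)) powr real m" using t by (simp add: powr_realpow powr_half_sqrt)
  then have "sqrt t ^ m = t powr (real m / 2)" by (simp add: powr_powr)
  then show ?thesis using t by (simp add: power_add power_mult)
qed

lemma sum_split_filter:
  assumes "finite A"
  shows "sum f A = sum f {x \<in> A. P x} + sum f {x \<in> A. \<not> P x}"
proof -
  have "A \<inter> {x. P x} = {x \<in> A. P x}" "A - {x. P x} = {x \<in> A. \<not> P x}" by auto
  then show ?thesis using sum.Int_Diff[OF assms, of f "{x. P x}"] by simp
qed

lemma sum_triple_Sigma:
  assumes "finite A" "\<And>x. x \<in> A \<Longrightarrow> finite (B x)" "\<And>x y. x \<in> A \<Longrightarrow> y \<in> B x \<Longrightarrow> finite (C x y)"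
  shows "(\<Sum>x\<in>A. \<Sum>y\<in>B x. \<Sum>t\<in>C x y. f x y t) = (\<Sum>(x,y,t)\<in>(SIGMA x:A. SIGMA y:B x. C x y). f x y t)"
proof -
  have "(\<Sum>x\<in>A. \<Sum>y\<in>B x. \<Sum>t\<in>C x y. f x y t) = (\<Sum>x\<in>A. \<Sum>(y,t)\<in>(SIGMA y:B x. C x y). f x y t)"
    by (rule sum.cong[OF refl], rule sum.Sigma) (use assms in auto)
  also have "\<dots> = (\<Sum>(x,yt)\<in>(SIGMA x:A. SIGMA y:B x. C x y). case yt of (y,t) \<Rightarrow> f x y t)"
    by (rule sum.Sigma) (use assms in \<open>auto intro!: finite_SigmaI\<close>)
  finally show ?thesis by (simp add: case_prod_unfold)
qed

definition lift :: "('m \<Rightarrow> int^'n) \<Rightarrow> ('m \<Rightarrow> nat) \<Rightarrow> (int^'n \<Rightarrow> nat) \<Rightarrow> int^'n \<Rightarrow> nat" where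
  "lift v \<alpha> g = (\<lambda>k. if k \<in> range v then \<alpha> (inv v k) else g k)"

definition ind :: "'a set \<Rightarrow> 'a \<Rightarrow> nat" where
  "ind p = (\<lambda>k. if k \<in> p then 1 else 0)"

locale truncation =
  fixes v :: "'m::finite \<Rightarrow> int^'n" and q :: nat and xi x :: "'m \<Rightarrow> real"
    and y :: "'m \<Rightarrow> complex" and z :: "int^'n \<Rightarrow> complex"
  assumes q_pos: "q \<ge> 1"
    and v_inj: "inj v"
    and H1: "\<forall>nn::'m \<Rightarrow> int. (\<Sum>i\<in>UNIV. nn i) = 0 \<and> 1 < (\<Sum>i\<in>UNIV. \<bar>nn i\<bar>)
               \<and> (\<Sum>i\<in>UNIV. \<bar>nn i\<bar>) \<le> 2*int q + 2 \<longrightarrow> piZ v nn \<noteq> 0"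
    and H2: "\<forall>nn::'m \<Rightarrow> int. (\<Sum>i\<in>UNIV. nn i) = 1 \<and> 1 < (\<Sum>i\<in>UNIV. \<bar>nn i\<bar>)
               \<and> (\<Sum>i\<in>UNIV. \<bar>nn i\<bar>) \<le> 2*int q + 1 \<longrightarrow> nsq (piZ v nn) - wsq v nn \<noteq> 0"
    and H4: "\<forall>l\<in>Xq2 q. 2 * wsq v l + nsq (piZ v l) \<noteq> 0"
    and xi_pos: "\<forall>i. xi i > 0" and y_small: "\<forall>i. norm (y i) < xi i"
    and finite_supp_z: "finite {k. z k \<noteq> 0}" and supp_z_Sc: "{k. z k \<noteq> 0} \<subseteq> Sc v"
begin

definition Z :: "(int^'n) set" where "Z = {k. z k \<noteq> 0}"
definition F :: "(int^'n) set" where "F = range v \<union> Z"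

lemma finite_Z: "finite Z"
  using finite_supp_z by (simp add: Z_def)

lemma finite_F: "finite F"
  using finite_Z by (simp add: F_def)

lemma Z_not_S: "k \<in> Z \<Longrightarrow> k \<notin> range v"
  using supp_z_Sc by (auto simp: Z_def Sc_def)

lemma Z_Sc: "k \<in> Z \<Longrightarrow> k \<in> Sc v"
  using supp_z_Sc by (auto simp: Z_def)

lemma inv_v [simp]: "inv v (v i) = i"
  using v_inj by simp

lemma sum_F: "sum \<phi> F = (\<Sum>i\<in>UNIV. \<phi> (v i)) + sum \<phi> Z"
  unfolding F_def using finite_Z Z_not_S sum.reindex[OF v_inj, of \<phi>]
  by (subst sum.union_disjoint) auto

lemma prod_F: "prod \<phi> F = (\<Prod>i\<in>UNIV. \<phi> (v i)) * prod \<phi> Z"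
  unfolding F_def using finite_Z Z_not_S prod.reindex[OF v_inj, of \<phi>]
  by (subst prod.union_disjoint) auto

lemma lift_v [simp]: "lift v \<alpha> g (v i) = \<alpha> i"
  by (simp add: lift_def)

lemma lift_off_S: "k \<notin> range v \<Longrightarrow> lift v \<alpha> g k = g k"
  by (simp add: lift_def)

lemma lift_comp [simp]: "lift v \<alpha> g \<circ> v = \<alpha>"
  by (auto simp: lift_def)

lemma lift_ext: "(\<forall>k. k \<notin> range v \<longrightarrow> a k = g k) \<Longrightarrow> a = lift v (a \<circ> v) g"
  by (auto simp: lift_def fun_eq_iff f_inv_into_f)

lemma RM_iff: "(a,b) \<in> RM q F \<longleftrightarrow> (\<forall>k. k\<notin>F \<longrightarrow> a k = 0) \<and> (\<forall>k. k \<notin> F \<longrightarrow> b k = 0)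
   \<and> (\<Sum>i\<in>UNIV. a (v i)) + sum a Z = q+1 \<and> (\<Sum>i\<in>UNIV. b (v i)) + sum b Z = q+1
   \<and> piZ v (\<lambda>i. int (a (v i)) - int (b (v i))) + (\<Sum>k\<in>Z. (int (a k) - int (b k)) *s k) = 0
   \<and> wsq v (\<lambda>i. int (a (v i)) - int (b (v i))) + (\<Sum>k\<in>Z. (int (a k) - int (b k)) * nsq k) = 0"
  unfolding RM_def mem_Collect_eq prod.case sum_F piZ_def wsq_def ..

subsection \<open>The substituted Hamiltonian as a sum over resonant pairs\<close>

text \<open>\<open>w i e\<close> is the substituted action, \<open>U i e\<close>, \<open>UB i e\<close> the substituted \<open>u_(v i)\<close>, \<open>u\<^sup>*_(v i)\<close>;
  \<open>G \<alpha> \<beta>\<close> is the tangential factor and \<open>Zm a b\<close> the normal factor of a monomial.\<close>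
definition "w i e = complex_of_real (xi i) + e\<^sup>2 * y i"
definition "U i e = csqrt (w i e) * cis (x i)"
definition "UB i e = csqrt (w i e) * cis (- x i)"
definition "G \<alpha> \<beta> e = (\<Prod>i\<in>UNIV. U i e ^ \<alpha> i) * (\<Prod>i\<in>UNIV. UB i e ^ \<beta> i)"
definition "Zm a b = (\<Prod>k\<in>Z. z k ^ a k) * (\<Prod>k\<in>Z. cnj (z k) ^ b k)"
definition "mcoef a b = (of_nat (multinom (q+1) a * multinom (q+1) b) :: complex)"
definition "Tm ab e = (case ab of (a,b) \<Rightarrow> mcoef a b
    * (\<Prod>k\<in>F. usub v xi x y z e k ^ a k) * (\<Prod>k\<in>F. ubsub v xi x y z e k ^ b k))"
definition "Quad e = (\<Sum>k\<in>F. of_int (nsq k) * usub v xi x y z e k * ubsub v xi x y z e k)"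

lemma Hsub_eq: "Hsub q v xi x y z e = Quad e + (\<Sum>ab\<in>RM q F. Tm ab e)"
  unfolding Hsub_def Hres_def Quad_def Tm_def mcoef_def F_def Z_def by (simp add: case_prod_unfold)

lemma usub_v [simp]: "usub v xi x y z e (v i) = U i e"
  by (simp add: usub_def U_def w_def)

lemma ubsub_v [simp]: "ubsub v xi x y z e (v i) = UB i e"
  by (simp add: ubsub_def UB_def w_def)

lemma usub_Z: "k \<in> Z \<Longrightarrow> usub v xi x y z e k = e * z k"
  using Z_not_S by (simp add: usub_def)

lemma ubsub_Z: "k \<in> Z \<Longrightarrow> ubsub v xi x y z e k = e * cnj (z k)"
  using Z_not_S by (simp add: ubsub_def)

lemma U_UB: "U i e * UB i e = w i e"
  unfolding U_def UB_def by (simp add: mult_ac cis_mult power2_eq_square[symmetric])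

lemma G_diag: "G \<alpha> \<alpha> e = (\<Prod>i\<in>UNIV. w i e ^ \<alpha> i)"
  unfolding G_def prod.distrib[symmetric] by (simp add: power_mult_distrib[symmetric] U_UB)

lemma Tm_factor: "Tm (a,b) e = mcoef a b * e ^ (sum a Z + sum b Z) * Zm a b * G (a \<circ> v) (b \<circ> v) e"
proof -
  have "(\<Prod>k\<in>Z. (e * c k) ^ n k) = e ^ sum n Z * (\<Prod>k\<in>Z. c k ^ n k)" for c n
    by (simp add: power_mult_distrib prod.distrib power_sum)
  then have "(\<Prod>k\<in>F. usub v xi x y z e k ^ a k) = (\<Prod>i\<in>UNIV. U i e ^ a (v i)) * (e ^ sum a Z * (\<Prod>k\<in>Z. z k ^ a k))"
    "(\<Prod>k\<in>F. ubsub v xi x y z e k ^ b k) = (\<Prod>i\<in>UNIV. UB i e ^ b (v i)) * (e ^ sum b Z * (\<Prod>k\<in>Z. cnj (z k) ^ b k))"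
    unfolding prod_F by (auto simp: usub_Z ubsub_Z cong: prod.cong)
  then show ?thesis unfolding Tm_def prod.case Zm_def G_def by (simp add: power_add mult_ac)
qed

lemma Quad_eq:
  "Quad e = (\<Sum>i\<in>UNIV. of_int (nsq (v i)) * w i e) + e\<^sup>2 * (\<Sum>k\<in>Z. of_int (nsq k) * (z k * cnj (z k)))"
  unfolding Quad_def sum_F
  by (simp add: U_UB[symmetric] usub_Z ubsub_Z sum_distrib_left mult_ac power2_eq_square cong: sum.cong)

subsection \<open>Resonant pairs of low normal degree\<close>

definition suppZ :: "(int^'n \<Rightarrow> nat) \<Rightarrow> (int^'n) set" where
  "suppZ a = {k \<in> Z. a k \<noteq> 0}"

lemma suppZ_lift: "p \<subseteq> Z \<Longrightarrow> suppZ (lift v \<alpha> (ind p)) = p"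
  using Z_not_S by (auto simp: suppZ_def lift_off_S ind_def split: if_splits)

lemma sumZ_lift: "p \<subseteq> Z \<Longrightarrow> sum (lift v \<alpha> (ind p)) Z = card p"
proof -
  assume p: "p \<subseteq> Z"
  have "sum (lift v \<alpha> (ind p)) Z = (\<Sum>k\<in>Z. if k \<in> p then 1 else 0)"
    by (rule sum.cong) (use Z_not_S in \<open>auto simp: lift_off_S ind_def\<close>)
  also have "\<dots> = card {k \<in> Z. k \<in> p}" using finite_Z by (simp add: sum.inter_filter[symmetric])
  also have "{k \<in> Z. k \<in> p} = p" using p by auto
  finally show ?thesis .
qed

lemma prodZ_lift: "p \<subseteq> Z \<Longrightarrow> (\<Prod>k\<in>Z. c k ^ lift v \<alpha> (ind p) k) = (\<Prod>k\<in>p. c k)"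
proof -
  assume p: "p \<subseteq> Z"
  have "(\<Prod>k\<in>Z. c k ^ lift v \<alpha> (ind p) k) = (\<Prod>k\<in>Z. if k \<in> p then c k else 1)"
    by (rule prod.cong) (use Z_not_S in \<open>auto simp: lift_off_S ind_def\<close>)
  also have "\<dots> = prod c {k \<in> Z. k \<in> p}" by (rule prod.inter_filter[OF finite_Z, symmetric])
  also have "{k \<in> Z. k \<in> p} = p" using p by auto
  finally show ?thesis .
qed

lemma momentsZ_lift:
  assumes "p \<subseteq> Z" "p' \<subseteq> Z"
  shows "(\<Sum>k\<in>Z. (int (lift v \<alpha> (ind p) k) - int (lift v \<beta> (ind p') k)) *s k) = sum (\<lambda>k. k) p - sum (\<lambda>k. k) p'"
    "(\<Sum>k\<in>Z. (int (lift v \<alpha> (ind p) k) - int (lift v \<beta> (ind p') k)) * nsq k) = sum nsq p - sum nsq p'"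
proof -
  have "(\<Sum>k\<in>Z. (int (lift v \<alpha> (ind p) k) - int (lift v \<beta> (ind p') k)) *s k) =
     (\<Sum>k\<in>Z. (if k \<in> p then k else 0)) - (\<Sum>k\<in>Z. (if k \<in> p' then k else 0))"
    unfolding sum_subtractf[symmetric]
    by (rule sum.cong) (use Z_not_S in \<open>auto simp: lift_off_S ind_def vec_eq_iff algebra_simps\<close>)
  moreover have "{k \<in> Z. k \<in> p} = p" "{k \<in> Z. k \<in> p'} = p'" using assms by auto
  ultimately show "(\<Sum>k\<in>Z. (int (lift v \<alpha> (ind p) k) - int (lift v \<beta> (ind p') k)) *s k) = sum (\<lambda>k. k) p - sum (\<lambda>k. k) p'"
    using finite_Z by (simp add: sum.inter_filter[symmetric])
  have "(\<Sum>k\<in>Z. (int (lift v \<alpha> (ind p) k) - int (lift v \<beta> (ind p') k)) * nsq k) =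
     (\<Sum>k\<in>Z. (if k \<in> p then nsq k else 0)) - (\<Sum>k\<in>Z. (if k \<in> p' then nsq k else 0))"
    unfolding sum_subtractf[symmetric]
    by (rule sum.cong) (use Z_not_S in \<open>auto simp: lift_off_S ind_def\<close>)
  moreover have "{k \<in> Z. k \<in> p} = p" "{k \<in> Z. k \<in> p'} = p'" using assms by auto
  ultimately show "(\<Sum>k\<in>Z. (int (lift v \<alpha> (ind p) k) - int (lift v \<beta> (ind p') k)) * nsq k) = sum nsq p - sum nsq p'"
    using finite_Z by (simp add: sum.inter_filter[symmetric])
qed

lemma RM_lift:
  assumes "p \<subseteq> Z" "p' \<subseteq> Z"
  shows "(lift v \<alpha> (ind p), lift v \<beta> (ind p')) \<in> RM q F \<longleftrightarrow>
     sum \<alpha> UNIV + card p = q+1 \<and> sum \<beta> UNIV + card p' = q+1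
   \<and> piZ v (\<lambda>i. int (\<alpha> i) - int (\<beta> i)) + sum (\<lambda>k. k) p - sum (\<lambda>k. k) p' = 0
   \<and> wsq v (\<lambda>i. int (\<alpha> i) - int (\<beta> i)) + sum nsq p - sum nsq p' = 0"
proof -
  have "\<forall>k. k \<notin> F \<longrightarrow> lift v \<gamma> (ind r) k = 0" if "r \<subseteq> Z" for \<gamma> r
    using that by (auto simp: F_def lift_def ind_def)
  then show ?thesis
    unfolding RM_iff momentsZ_lift[OF assms] sumZ_lift[OF assms(1)] sumZ_lift[OF assms(2)]
    using assms by (simp add: algebra_simps)
qed

text \<open>The multinomial coefficient only sees the nonzero entries, which are the same for
  \<open>\<alpha>\<close> and for its lift with a set of normal sites.\<close>
lemma multinom_lift:
  assumes "p \<subseteq> Z"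
  shows "multinom r (lift v \<alpha> (ind p)) = multinom r \<alpha>"
proof -
  have fp: "finite p" using finite_subset[OF assms finite_Z] .
  have supp: "{k. lift v \<alpha> (ind p) k \<noteq> 0} = v ` {i. \<alpha> i \<noteq> 0} \<union> p"
    using assms Z_not_S by (auto simp: lift_def ind_def dest: injD[OF v_inj])
  have disj: "v ` {i. \<alpha> i \<noteq> 0} \<inter> p = {}" using assms Z_not_S by auto
  have "multinom_denom (lift v \<alpha> (ind p)) =
      (\<Prod>k\<in>v ` {i. \<alpha> i \<noteq> 0}. fact (lift v \<alpha> (ind p) k)) * (\<Prod>k\<in>p. fact (lift v \<alpha> (ind p) k))"
    unfolding multinom_denom_def supp by (rule prod.union_disjoint) (use fp disj in auto)
  also have "(\<Prod>k\<in>p. fact (lift v \<alpha> (ind p) k)) = (1::nat)"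
    by (rule prod.neutral) (use assms Z_not_S in \<open>auto simp: lift_off_S ind_def\<close>)
  also have "(\<Prod>k\<in>v ` {i. \<alpha> i \<noteq> 0}. fact (lift v \<alpha> (ind p) k)) = multinom_denom \<alpha>"
    by (simp add: prod.reindex[OF inj_on_subset[OF v_inj subset_UNIV]] o_def multinom_denom_def)
  finally show ?thesis by (simp add: multinom_eq_div)
qed

lemma lift_shape:
  assumes "\<forall>k. k \<notin> F \<longrightarrow> a k = 0" "\<forall>k\<in>Z. a k \<le> 1"
  shows "a = lift v (a \<circ> v) (ind (suppZ a))"
proof (rule lift_ext, intro allI impI)
  fix k assume "k \<notin> range v"
  then show "a k = ind (suppZ a) k"
    using assms by (cases "k \<in> Z") (auto simp: F_def ind_def suppZ_def le_Suc_eq)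
qed

text \<open>Hypothesis (4) excludes resonant pairs containing a square \<open>z_h\<^sup>2\<close> and no \<open>z\<^sup>*\<close>.\<close>
lemma no_square:
  assumes ab: "(a,b) \<in> RM q F" and deg: "sum a Z = 2" "sum b Z = 0" and h: "h \<in> Z" "a h = 2"
  shows False
proof -
  define l where "l = (\<lambda>i. int (a (v i)) - int (b (v i)))"
  have a_Z: "a k = (if k = h then 2 else 0)" if "k \<in> Z" for k
  proof -
    have "sum a Z = a h + sum a (Z - {h})" using finite_Z h by (simp add: sum.remove)
    then have "\<forall>k\<in>Z - {h}. a k = 0" using deg h finite_Z by simp
    then show ?thesis using that h by auto
  qed
  have b_Z: "b k = 0" if "k \<in> Z" for k using deg finite_Z that by simp
  have "(\<Sum>k\<in>Z. (int (a k) - int (b k)) *s k) = (\<Sum>k\<in>Z. if k = h then 2 *s k else 0)"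
    by (rule sum.cong) (auto simp: a_Z b_Z)
  then have mom: "piZ v l + 2 *s h = 0"
    using ab h finite_Z unfolding RM_iff l_def by simp
  have "(\<Sum>k\<in>Z. (int (a k) - int (b k)) * nsq k) = (\<Sum>k\<in>Z. if k = h then 2 * nsq k else 0)"
    by (rule sum.cong) (auto simp: a_Z b_Z)
  then have en: "wsq v l + 2 * nsq h = 0"
    using ab h finite_Z unfolding RM_iff l_def by simp
  have sums: "sum (a \<circ> v) UNIV = q - 1" "sum (b \<circ> v) UNIV = q + 1"
    using ab deg q_pos unfolding RM_iff by auto
  then have eta: "eta l = -2" unfolding l_def eta_diff using q_pos by (simp add: o_def)
  show False
  proof (cases "\<exists>i. l = (\<lambda>j. if j = i then -2 else 0)")
    case True
    then obtain i where "l = (\<lambda>j. if j = i then -2 else 0)" by blast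
    then have "h = v i" using mom piZ_single[of v i "-2"] by (simp add: vec_eq_iff)
    then show False using Z_not_S[OF h(1)] by auto
  next
    case False
    have "l \<noteq> (\<lambda>i. 0)" using eta by (auto simp: eta_def)
    then have "l \<in> Xq q"
      using in_Xq[of "a \<circ> v" "b \<circ> v"] sums q_pos False eta unfolding l_def by (auto simp: o_def)
    then have "2 * wsq v l + nsq (piZ v l) \<noteq> 0" using H4 eta by (simp add: Xq2_def)
    moreover have "piZ v l = (-2) *s h" using mom by (simp add: vec_eq_iff eq_neg_iff_add_eq_0)
    ultimately show False using en by (simp add: nsq_scale)
  qed
qed

lemma low_degree_shape:
  assumes ab: "(a,b) \<in> RM q F" and deg: "sum a Z + sum b Z \<le> 2"
  shows "a = lift v (a \<circ> v) (ind (suppZ a))" "card (suppZ a) = sum a Z"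
proof -
  have "a k \<le> 1" if k: "k \<in> Z" for k
  proof (rule ccontr)
    assume "\<not> a k \<le> 1"
    moreover have "a k \<le> sum a Z" using member_le_sum[of k Z a] finite_Z k by simp
    ultimately have "a k = 2" "sum a Z = 2" "sum b Z = 0" using deg by auto
    then show False using no_square[OF ab _ _ k] by simp
  qed
  then show shape: "a = lift v (a \<circ> v) (ind (suppZ a))"
    using ab lift_shape by (simp add: RM_iff)
  have "suppZ a \<subseteq> Z" by (auto simp: suppZ_def)
  then show "card (suppZ a) = sum a Z"
    using sumZ_lift[of "suppZ a" "a \<circ> v"] shape by simp
qed

lemma low_degree_pair:
  assumes ab: "(a,b) \<in> RM q F" and deg: "sum a Z + sum b Z \<le> 2"
  shows "(a,b) = (lift v (a \<circ> v) (ind (suppZ a)), lift v (b \<circ> v) (ind (suppZ b)))"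
    "suppZ a \<subseteq> Z" "suppZ b \<subseteq> Z" "card (suppZ a) = sum a Z" "card (suppZ b) = sum b Z"
  using low_degree_shape[OF ab deg] low_degree_shape[of b a] ab deg
  by (auto simp: RM_swap suppZ_def)

text \<open>Degree zero: by hypothesis (1) the tangential parts coincide.\<close>
lemma degree_zero_diagonal:
  assumes ab: "(a,b) \<in> RM q F" and deg: "sum a Z = 0" "sum b Z = 0"
  shows "b = a" "a = lift v (a \<circ> v) (ind {})"
proof -
  note shape = low_degree_pair[OF ab, unfolded deg, simplified]
  have empty: "suppZ a = {}" "suppZ b = {}"
    using shape(2-5) deg finite_Z by (auto simp: finite_subset card_eq_0_iff)
  have "(lift v (a \<circ> v) (ind {}), lift v (b \<circ> v) (ind {})) \<in> RM q F"
    using ab shape(1) empty by simp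
  then have eqs: "sum (a \<circ> v) UNIV = q + 1" "sum (b \<circ> v) UNIV = q + 1"
    "piZ v (\<lambda>i. int (a (v i)) - int (b (v i))) = 0"
    unfolding RM_lift[OF empty_subsetI empty_subsetI] by simp_all
  define nn where "nn i = int (a (v i)) - int (b (v i))" for i
  have "(\<Sum>i\<in>UNIV. nn i) = int (sum (a \<circ> v) UNIV) - int (sum (b \<circ> v) UNIV)"
    using eta_diff[of "a \<circ> v" "b \<circ> v"] unfolding eta_def nn_def comp_def .
  then have "(\<Sum>i\<in>UNIV. nn i) = 0" using eqs by (simp del: of_nat_sum)
  moreover have "(\<Sum>i\<in>UNIV. \<bar>nn i\<bar>) \<le> 2 * int q + 2"
    using l1_diff_le[of "a \<circ> v" "b \<circ> v"] eqs unfolding nn_def by (simp add: o_def del: of_nat_sum)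
  ultimately have "nn = (\<lambda>_. 0)"
    using H1 eqs(3) l1_le_1_sum_0[of nn] unfolding nn_def by fastforce
  then have "a \<circ> v = b \<circ> v" unfolding nn_def by (auto simp: fun_eq_iff)
  then show "b = a" "a = lift v (a \<circ> v) (ind {})" using shape(1) empty by auto
qed

text \<open>Degree one is impossible: the tangential part \<open>nn\<close> would satisfy \<open>\<pi>(nn) = h\<close> and
  \<open>\<Sum> nn_j |v_j|\<^sup>2 = |h|\<^sup>2\<close>, so by hypothesis (2) \<open>nn\<close> is a unit vector and \<open>h \<in> S\<close>.\<close>

lemma no_degree_one_half:
  assumes ab: "(a,b) \<in> RM q F" and deg: "sum a Z = 1" "sum b Z = 0"
  shows False
proof -
  note shape = low_degree_pair[OF ab, unfolded deg, simplified]
  obtain h where h: "suppZ a = {h}" using shape(4) deg by (auto simp: card_1_singleton_iff)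
  then have hZ: "{h} \<subseteq> Z" using shape(2) by simp
  have "suppZ b = {}" using shape(3,5) deg finite_Z by (auto simp: finite_subset card_eq_0_iff)
  then have "(lift v (a \<circ> v) (ind {h}), lift v (b \<circ> v) (ind {})) \<in> RM q F"
    using ab shape(1) h by simp
  then have eqs: "sum (a \<circ> v) UNIV = q" "sum (b \<circ> v) UNIV = q + 1"
    "piZ v (\<lambda>i. int (a (v i)) - int (b (v i))) + h = 0"
    "wsq v (\<lambda>i. int (a (v i)) - int (b (v i))) + nsq h = 0"
    unfolding RM_lift[OF hZ empty_subsetI] by simp_all
  define nn where "nn i = int (b (v i)) - int (a (v i))" for i
  have minus: "nn = (\<lambda>i. - (int (a (v i)) - int (b (v i))))" by (auto simp: nn_def fun_eq_iff)
  have "piZ v (\<lambda>i. int (a (v i)) - int (b (v i))) = - h" using eqs(3) by (simp add: eq_neg_iff_add_eq_0)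
  then have "piZ v nn = h" "wsq v nn = nsq h" using eqs(4) unfolding minus piZ_uminus wsq_uminus by auto
  moreover have "(\<Sum>i\<in>UNIV. nn i) = int (sum (b \<circ> v) UNIV) - int (sum (a \<circ> v) UNIV)"
    using eta_diff[of "b \<circ> v" "a \<circ> v"] unfolding eta_def nn_def comp_def .
  then have "(\<Sum>i\<in>UNIV. nn i) = 1" using eqs by (simp del: of_nat_sum)
  moreover have "(\<Sum>i\<in>UNIV. \<bar>nn i\<bar>) \<le> 2 * int q + 1"
    using l1_diff_le[of "b \<circ> v" "a \<circ> v"] eqs unfolding nn_def by (simp add: o_def del: of_nat_sum)
  ultimately obtain j where "nn = (\<lambda>i. if i = j then 1 else 0)"
    using H2 l1_le_1_sum_1[of nn] by fastforce
  then have "h = v j" using \<open>piZ v nn = h\<close> piZ_single[of v j 1] by simp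
  then show False using Z_not_S hZ by auto
qed

lemma no_degree_one:
  assumes "(a,b) \<in> RM q F"
  shows "sum a Z + sum b Z \<noteq> 1"
proof
  assume "sum a Z + sum b Z = 1"
  then have "sum a Z = 1 \<and> sum b Z = 0 \<or> sum b Z = 1 \<and> sum a Z = 0" by auto
  then show False using no_degree_one_half[of a b] no_degree_one_half[of b a] assms by (auto simp: RM_swap)
qed

subsection \<open>The jet of the substituted Hamiltonian\<close>

text \<open>Resonant pairs sorted by their normal degree; \<open>val ab\<close> is the \<open>e\<^sup>2\<close>-coefficient of a
  monomial of normal degree 2, and \<open>K r\<close> the set of tangential multi-indices of weight \<open>r\<close>.\<close>
definition "R0 = {ab \<in> RM q F. sum (fst ab) Z + sum (snd ab) Z = 0}"
definition "Rhigh = {ab \<in> RM q F. 2 \<le> sum (fst ab) Z + sum (snd ab) Z}"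
definition "R2 = {ab \<in> RM q F. sum (fst ab) Z + sum (snd ab) Z = 2}"
definition "val ab = mcoef (fst ab) (snd ab) * Zm (fst ab) (snd ab) * G (fst ab \<circ> v) (snd ab \<circ> v) 0"
definition "K r = {\<alpha>::'m \<Rightarrow> nat. sum \<alpha> UNIV = r}"
definition "xc i = complex_of_real (xi i)"

lemma finite_K: "finite (K r)"
  by (rule finite_subset[OF _ finite_bounded_multi_indices[of r]])
    (auto simp: K_def intro: member_le_sum[of _ UNIV, simplified])

lemma sum_R0:
  "(\<Sum>ab\<in>R0. Tm ab e) = (\<Sum>\<alpha>\<in>K (q+1). of_nat (multinom (q+1) \<alpha> ^ 2) * (\<Prod>i\<in>UNIV. w i e ^ \<alpha> i))"
proof (rule sum.reindex_bij_witness[where i="\<lambda>\<alpha>. (lift v \<alpha> (ind {}), lift v \<alpha> (ind {}))"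
      and j="\<lambda>ab. fst ab \<circ> v"])
  fix ab assume ab: "ab \<in> R0"
  obtain a b where abe: "ab = (a,b)" by (cases ab)
  have ab': "(a,b) \<in> RM q F" "sum a Z = 0" "sum b Z = 0" using ab abe by (auto simp: R0_def)
  note diag = degree_zero_diagonal[OF ab']
  show "(lift v (fst ab \<circ> v) (ind {}), lift v (fst ab \<circ> v) (ind {})) = ab" using diag abe by simp
  have "sum (a \<circ> v) UNIV = q+1" using ab' by (simp add: RM_iff)
  then show "fst ab \<circ> v \<in> K (q+1)" using abe by (simp add: K_def)
  have "multinom (q+1) (lift v (a \<circ> v) (ind {})) = multinom (q+1) (a \<circ> v)" by (rule multinom_lift) simp
  then have "mcoef a a = of_nat (multinom (q+1) (a \<circ> v) ^ 2)"
    unfolding mcoef_def diag(2)[symmetric] by (simp add: power2_eq_square)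
  moreover have "Zm a a = 1" unfolding Zm_def using ab'(2) finite_Z by simp
  ultimately show "of_nat (multinom (q+1) (fst ab \<circ> v) ^ 2) * (\<Prod>i\<in>UNIV. w i e ^ (fst ab \<circ> v) i) = Tm ab e"
    using abe ab' diag(1) by (simp add: Tm_factor G_diag)
next
  fix \<alpha> assume "\<alpha> \<in> K (q+1)"
  then show "(lift v \<alpha> (ind {}), lift v \<alpha> (ind {})) \<in> R0"
    using RM_lift[of "{}" "{}" \<alpha> \<alpha>] sumZ_lift[of "{}" \<alpha>] by (simp add: K_def R0_def piZ_zero wsq_zero)
qed simp

lemma RM_split: "(\<Sum>ab\<in>RM q F. Tm ab e) = (\<Sum>ab\<in>R0. Tm ab e) + (\<Sum>ab\<in>Rhigh. Tm ab e)"
proof -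
  have "RM q F = R0 \<union> Rhigh"
  proof safe
    fix a b assume "(a,b) \<in> RM q F" "(a,b) \<notin> Rhigh"
    then show "(a,b) \<in> R0" using no_degree_one[of a b] by (auto simp: R0_def Rhigh_def)
  qed (auto simp: R0_def Rhigh_def)
  moreover have "R0 \<inter> Rhigh = {}" by (auto simp: R0_def Rhigh_def)
  moreover have "finite R0" "finite Rhigh" using finite_RM[OF finite_F] by (auto simp: R0_def Rhigh_def)
  ultimately show ?thesis by (simp add: sum.union_disjoint)
qed

lemma smooth2_G: "smooth2 (G \<alpha> \<beta>)"
proof -
  have "smooth2 (U i)" "smooth2 (UB i)" for i
    unfolding U_def UB_def w_def using xi_pos y_small
    by (auto intro!: smooth2_mult smooth2_csqrt smooth2_const)
  then show ?thesis unfolding G_def by (auto intro!: smooth2_mult smooth2_prod smooth2_power)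
qed

lemma has_jet2_Rhigh: "has_jet2 (\<lambda>e. \<Sum>ab\<in>Rhigh. Tm ab e) 0 0 (2 * (\<Sum>ab\<in>R2. val ab))"
proof -
  have monomial: "has_jet2 (Tm ab) 0 0 (if ab \<in> R2 then 2 * val ab else 0)" if "ab \<in> Rhigh" for ab
  proof -
    obtain a b where abe: "ab = (a,b)" by (cases ab)
    have d: "2 \<le> sum a Z + sum b Z" using that abe by (simp add: Rhigh_def)
    have "Tm ab = (\<lambda>e. (mcoef a b * Zm a b) * e ^ (sum a Z + sum b Z) * G (a \<circ> v) (b \<circ> v) e)"
      using abe by (auto simp: Tm_factor mult_ac)
    moreover have "(if ab \<in> R2 then 2 * val ab else 0) =
       (if sum a Z + sum b Z = 2 then 2 * (mcoef a b * Zm a b) * G (a \<circ> v) (b \<circ> v) 0 else 0)"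
      using that abe by (auto simp: val_def R2_def Rhigh_def mult_ac)
    ultimately show ?thesis using has_jet2_high_order[OF smooth2_G d] by simp
  qed
  have "finite Rhigh" using finite_RM[OF finite_F] by (auto simp: Rhigh_def)
  moreover have "R2 = {ab \<in> Rhigh. ab \<in> R2}" by (auto simp: R2_def Rhigh_def)
  ultimately have second: "(\<Sum>ab\<in>Rhigh. if ab \<in> R2 then 2 * val ab else 0) = (\<Sum>ab\<in>R2. 2 * val ab)"
    using sum.inter_filter[of Rhigh "\<lambda>ab. 2 * val ab" "\<lambda>ab. ab \<in> R2"] by simp
  have "has_jet2 (\<lambda>e. \<Sum>ab\<in>Rhigh. Tm ab e) (\<Sum>ab\<in>Rhigh. 0) (\<Sum>ab\<in>Rhigh. 0)
      (\<Sum>ab\<in>Rhigh. if ab \<in> R2 then 2 * val ab else 0)"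
    by (rule has_jet2_sum) (use \<open>finite Rhigh\<close> monomial in auto)
  then show ?thesis unfolding second by (simp add: sum_distrib_left)
qed

lemma has_jet2_R0: "has_jet2 (\<lambda>e. \<Sum>ab\<in>R0. Tm ab e)
   (\<Sum>\<alpha>\<in>K (q+1). of_nat (multinom (q+1) \<alpha> ^ 2) * (\<Prod>i\<in>UNIV. xc i ^ \<alpha> i)) 0
   (\<Sum>\<alpha>\<in>K (q+1). of_nat (multinom (q+1) \<alpha> ^ 2) *
       (\<Sum>i\<in>UNIV. (of_nat (\<alpha> i) * xc i ^ (\<alpha> i - 1) * (2 * y i)) * (\<Prod>j\<in>UNIV-{i}. xc j ^ \<alpha> j)))"
proof -
  have power: "has_jet2 (\<lambda>e. w i e ^ n) (xc i ^ n) 0 (of_nat n * xc i ^ (n - 1) * (2 * y i))" for i n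
    using has_jet2_power_flat[OF has_jet2_action[of "xc i" "y i"]] unfolding w_def xc_def .
  have "has_jet2 (\<lambda>e. of_nat (multinom (q+1) \<alpha> ^ 2) * (\<Prod>i\<in>UNIV. w i e ^ \<alpha> i))
     (of_nat (multinom (q+1) \<alpha> ^ 2) * (\<Prod>i\<in>UNIV. xc i ^ \<alpha> i)) 0
     (of_nat (multinom (q+1) \<alpha> ^ 2) *
       (\<Sum>i\<in>UNIV. (of_nat (\<alpha> i) * xc i ^ (\<alpha> i - 1) * (2 * y i)) * (\<Prod>j\<in>UNIV-{i}. xc j ^ \<alpha> j)))" for \<alpha>
    using has_jet2_mult[OF has_jet2_const has_jet2_prod_flat[OF finite_class.finite_UNIV power]] by simp
  from has_jet2_sum[OF finite_K this] show ?thesis unfolding sum_R0 by simp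
qed

lemma has_jet2_Quad: "has_jet2 Quad (\<Sum>i\<in>UNIV. of_int (nsq (v i)) * xc i) 0
   ((\<Sum>i\<in>UNIV. of_int (nsq (v i)) * (2 * y i)) + 2 * (\<Sum>k\<in>Z. of_int (nsq k) * (z k * cnj (z k))))"
proof -
  have "has_jet2 (\<lambda>e. \<Sum>i\<in>UNIV. of_int (nsq (v i)) * w i e) (\<Sum>i\<in>UNIV. of_int (nsq (v i)) * xc i) 0
    (\<Sum>i\<in>UNIV. of_int (nsq (v i)) * (2 * y i))"
    using has_jet2_sum[OF finite_class.finite_UNIV has_jet2_mult[OF has_jet2_const has_jet2_action]]
    unfolding w_def xc_def by simp
  moreover have "has_jet2 (\<lambda>e. e\<^sup>2 * c) 0 0 (2 * c)" for c
    using has_jet2_mult[OF has_jet2_monomial[of 2] has_jet2_const[of c]] by simp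
  ultimately show ?thesis using has_jet2_add unfolding Quad_eq[abs_def] by fastforce
qed

lemma has_jet2_Hsub: "has_jet2 (Hsub q v xi x y z)
   ((\<Sum>i\<in>UNIV. of_int (nsq (v i)) * xc i) + (\<Sum>\<alpha>\<in>K (q+1). of_nat (multinom (q+1) \<alpha> ^ 2) * (\<Prod>i\<in>UNIV. xc i ^ \<alpha> i))) 0
   (((\<Sum>i\<in>UNIV. of_int (nsq (v i)) * (2 * y i)) + 2 * (\<Sum>k\<in>Z. of_int (nsq k) * (z k * cnj (z k))))
    + (\<Sum>\<alpha>\<in>K (q+1). of_nat (multinom (q+1) \<alpha> ^ 2) *
       (\<Sum>i\<in>UNIV. (of_nat (\<alpha> i) * xc i ^ (\<alpha> i - 1) * (2 * y i)) * (\<Prod>j\<in>UNIV-{i}. xc j ^ \<alpha> j)))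
    + 2 * (\<Sum>ab\<in>R2. val ab))"
proof -
  have "Hsub q v xi x y z = (\<lambda>e. Quad e + ((\<Sum>ab\<in>R0. Tm ab e) + (\<Sum>ab\<in>Rhigh. Tm ab e)))"
    by (auto simp: Hsub_eq RM_split)
  then show ?thesis using has_jet2_add[OF has_jet2_Quad has_jet2_add[OF has_jet2_R0 has_jet2_Rhigh]]
    by (simp add: add.assoc)
qed

lemma G_at_0: "G \<alpha> \<beta> 0 = of_real (\<Prod>i\<in>UNIV. sqrt (xi i) ^ (\<alpha> i + \<beta> i))
    * cis (\<Sum>i\<in>UNIV. (real (\<alpha> i) - real (\<beta> i)) * x i)"
proof -
  have U0: "U i 0 = of_real (sqrt (xi i)) * cis (x i)" "UB i 0 = of_real (sqrt (xi i)) * cis (- x i)" for i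
    using xi_pos by (auto simp: U_def UB_def w_def less_imp_le)
  have "cis t ^ a * cis (- t) ^ b = cis ((real a - real b) * t)" for t and a b :: nat
    unfolding Complex.DeMoivre cis_mult by (rule arg_cong[where f=cis]) (simp add: algebra_simps)
  then have "(of_real s * cis t) ^ a * (of_real s * cis (- t)) ^ b
      = of_real (s ^ (a + b)) * cis ((real a - real b) * t)" for s t and a b :: nat
    by (simp add: power_mult_distrib power_add mult_ac)
  then have "G \<alpha> \<beta> 0 = (\<Prod>i\<in>UNIV. of_real (sqrt (xi i) ^ (\<alpha> i + \<beta> i)) * cis ((real (\<alpha> i) - real (\<beta> i)) * x i))"
    unfolding G_def U0 prod.distrib[symmetric] by simp
  then show ?thesis by (simp add: prod.distrib prod_cis)
qed

lemma G_at_0_pair: "G (\<lambda>i. posp l i + a i) (\<lambda>i. negp l i + a i) 0 =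
   of_real (xihalf xi l * (\<Prod>i\<in>UNIV. xi i ^ a i)) * cis (lx l x)"
proof -
  have "(\<Prod>i\<in>UNIV. sqrt (xi i) ^ (posp l i + a i + (negp l i + a i))) = xihalf xi l * (\<Prod>i\<in>UNIV. xi i ^ a i)"
    unfolding xihalf_def prod.distrib[symmetric]
  proof (rule prod.cong[OF refl])
    fix i
    have e: "posp l i + a i + (negp l i + a i) = (posp l i + negp l i) + 2 * a i" by simp
    show "sqrt (xi i) ^ (posp l i + a i + (negp l i + a i)) = xi i powr (real (posp l i + negp l i) / 2) * xi i ^ a i"
      unfolding e by (rule sqrt_power_split) (use xi_pos in auto)
  qed
  moreover have "(\<Sum>i\<in>UNIV. (real (posp l i + a i) - real (negp l i + a i)) * x i) = lx l x"
    unfolding lx_def by (rule sum.cong) (auto simp: posp_def negp_def)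
  ultimately show ?thesis unfolding G_at_0 by simp
qed

lemma G_at_0_diag: "G \<alpha> \<alpha> 0 = (\<Prod>i\<in>UNIV. xc i ^ \<alpha> i)"
  unfolding G_diag w_def xc_def by simp

lemma val_swap: "val (prod.swap ab) = cnj (val ab)"
proof (cases ab)
  case (Pair a b)
  have "(\<Sum>i\<in>UNIV. (real ((b \<circ> v) i) - real ((a \<circ> v) i)) * x i)
      = - (\<Sum>i\<in>UNIV. (real ((a \<circ> v) i) - real ((b \<circ> v) i)) * x i)"
    by (simp add: sum_negf[symmetric] algebra_simps)
  then have "G (b \<circ> v) (a \<circ> v) 0 = cnj (G (a \<circ> v) (b \<circ> v) 0)"
    unfolding G_at_0 by (simp add: add.commute cis_cnj)
  moreover have "Zm b a = cnj (Zm a b)" unfolding Zm_def by (simp add: mult.commute)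
  moreover have "mcoef b a = cnj (mcoef a b)" unfolding mcoef_def by (simp add: mult.commute)
  ultimately show ?thesis using Pair by (simp add: val_def)
qed

lemma val_lift:
  assumes "p \<subseteq> Z" "p' \<subseteq> Z"
  shows "val (lift v \<alpha> (ind p), lift v \<beta> (ind p')) =
    of_nat (multinom (q+1) \<alpha> * multinom (q+1) \<beta>) * ((\<Prod>k\<in>p. z k) * (\<Prod>k\<in>p'. cnj (z k))) * G \<alpha> \<beta> 0"
  unfolding val_def mcoef_def Zm_def fst_conv snd_conv prodZ_lift[OF assms(1)] prodZ_lift[OF assms(2)]
    lift_comp multinom_lift[OF assms(1)] multinom_lift[OF assms(2)] ..

text \<open>Encoding of a pair of multi-indices by \<open>l = \<alpha> - \<beta>\<close>, \<open>a = min \<alpha> \<beta>\<close> and its normal supports.\<close>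
definition pair_of :: "('m \<Rightarrow> int) \<Rightarrow> ('m \<Rightarrow> nat) \<Rightarrow> (int^'n) set \<Rightarrow> (int^'n) set
    \<Rightarrow> (int^'n \<Rightarrow> nat) \<times> (int^'n \<Rightarrow> nat)" where
  "pair_of l a p p' = (lift v (\<lambda>i. posp l i + a i) (ind p), lift v (\<lambda>i. negp l i + a i) (ind p'))"

lemma pair_of_lift:
  "pair_of (\<lambda>i. int (\<alpha> i) - int (\<beta> i)) (\<lambda>i. min (\<alpha> i) (\<beta> i)) p p' = (lift v \<alpha> (ind p), lift v \<beta> (ind p'))"
  unfolding pair_of_def posp_negp_min[OF refl] ..

lemma pair_of_RM:
  assumes "p \<subseteq> Z" "p' \<subseteq> Z"
  shows "pair_of l a p p' \<in> RM q F \<longleftrightarrow>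
     sum (\<lambda>i. posp l i + a i) UNIV + card p = q+1 \<and> sum (\<lambda>i. negp l i + a i) UNIV + card p' = q+1
   \<and> piZ v l + sum (\<lambda>k. k) p - sum (\<lambda>k. k) p' = 0 \<and> wsq v l + sum nsq p - sum nsq p' = 0"
  unfolding pair_of_def RM_lift[OF assms] posp_negp_shift ..

definition decode :: "(int^'n \<Rightarrow> nat) \<times> (int^'n \<Rightarrow> nat) \<Rightarrow> ('m \<Rightarrow> int) \<times> ('m \<Rightarrow> nat)" where
  "decode ab = ((\<lambda>i. int (fst ab (v i)) - int (snd ab (v i))), (\<lambda>i. min (fst ab (v i)) (snd ab (v i))))"

lemma decode_pair_of: "decode (pair_of l a p p') = (l, a)"
  by (auto simp: decode_def pair_of_def posp_def negp_def fun_eq_iff)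

lemma val_pair_of:
  assumes "p \<subseteq> Z" "p' \<subseteq> Z"
  shows "val (pair_of l a p p') = of_real (real (multinom (q+1) (\<lambda>i. posp l i + a i) * multinom (q+1) (\<lambda>i. negp l i + a i))
      * xihalf xi l * (\<Prod>i\<in>UNIV. xi i ^ a i)) * ((\<Prod>k\<in>p. z k) * (\<Prod>k\<in>p'. cnj (z k))) * cis (lx l x)"
  unfolding pair_of_def val_lift[OF assms] G_at_0_pair by (simp add: mult_ac)

lemma R2_lift:
  assumes "(a,b) \<in> R2"
  shows "(lift v (a \<circ> v) (ind (suppZ a)), lift v (b \<circ> v) (ind (suppZ b))) = (a,b)"
    "(lift v (a \<circ> v) (ind (suppZ a)), lift v (b \<circ> v) (ind (suppZ b))) \<in> RM q F"
    "suppZ a \<subseteq> Z" "suppZ b \<subseteq> Z" "card (suppZ a) = sum a Z" "card (suppZ b) = sum b Z"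
  using assms low_degree_pair[of a b] by (auto simp: R2_def)

text \<open>Monomials \<open>z_h z\<^sup>*_k\<close> with equal (\<open>R11d\<close>) or different (\<open>R11o\<close>) tangential parts, and
  monomials \<open>z_h z_k\<close> (\<open>R20\<close>) and \<open>z\<^sup>*_h z\<^sup>*_k\<close> (\<open>R02\<close>).\<close>
definition "R1 = {ab \<in> R2. sum (fst ab) Z = 1}"
definition "R11d = {ab \<in> R1. fst ab \<circ> v = snd ab \<circ> v}"
definition "R11o = {ab \<in> R1. fst ab \<circ> v \<noteq> snd ab \<circ> v}"
definition "R20 = {ab \<in> R2. sum (fst ab) Z = 2}"
definition "R02 = {ab \<in> R2. sum (fst ab) Z = 0}"

lemma R2_split:
  "(\<Sum>ab\<in>R2. val ab) = (\<Sum>ab\<in>R11d. val ab) + (\<Sum>ab\<in>R11o. val ab) + (\<Sum>ab\<in>R20. val ab) + (\<Sum>ab\<in>R02. val ab)"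
proof -
  have fin: "finite R2" using finite_RM[OF finite_F] by (simp add: R2_def)
  have rest: "{ab \<in> {ab \<in> R2. sum (fst ab) Z \<noteq> 1}. sum (fst ab) Z = 2} = R20"
    "{ab \<in> {ab \<in> R2. sum (fst ab) Z \<noteq> 1}. sum (fst ab) Z \<noteq> 2} = R02"
    by (auto simp: R20_def R02_def R2_def)
  show ?thesis
    using sum_split_filter[OF fin, of val "\<lambda>ab. sum (fst ab) Z = 1"]
      sum_split_filter[of R1 val "\<lambda>ab. fst ab \<circ> v = snd ab \<circ> v"]
      sum_split_filter[of "{ab \<in> R2. sum (fst ab) Z \<noteq> 1}" val "\<lambda>ab. sum (fst ab) Z = 2"] fin
    unfolding rest R1_def[symmetric] R11d_def[symmetric] R11o_def[symmetric] by (simp add: R1_def add.assoc)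
qed

lemma sum_R02: "(\<Sum>ab\<in>R02. val ab) = cnj (\<Sum>ab\<in>R20. val ab)"
proof -
  have "(\<Sum>ab\<in>R02. val ab) = (\<Sum>ab\<in>R20. val (prod.swap ab))"
    by (rule sum.reindex_bij_witness[of _ prod.swap prod.swap]) (auto simp: R02_def R20_def R2_def RM_swap)
  then show ?thesis by (simp add: val_swap)
qed

lemma sum_R11d_pairs: "(\<Sum>ab\<in>R11d. val ab) = (\<Sum>(h,\<alpha>)\<in>Z \<times> K q.
    of_nat (Suc q * multinom q \<alpha> * (Suc q * multinom q \<alpha>)) * (z h * cnj (z h)) * (\<Prod>i\<in>UNIV. xc i ^ \<alpha> i))"
proof (rule sum.reindex_bij_witness[symmetric, where j="\<lambda>(h,\<alpha>). (lift v \<alpha> (ind {h}), lift v \<alpha> (ind {h}))"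
      and i="\<lambda>ab. (the_elem (suppZ (fst ab)), fst ab \<circ> v)"])
  fix t assume t: "t \<in> Z \<times> K q"
  obtain h \<alpha> where te: "t = (h,\<alpha>)" by (cases t)
  have h: "{h} \<subseteq> Z" "sum \<alpha> UNIV = q" using t te by (auto simp: K_def)
  show "(\<lambda>ab. (the_elem (suppZ (fst ab)), fst ab \<circ> v)) ((\<lambda>(h,\<alpha>). (lift v \<alpha> (ind {h}), lift v \<alpha> (ind {h}))) t) = t"
    using te suppZ_lift[OF h(1)] by simp
  have "(lift v \<alpha> (ind {h}), lift v \<alpha> (ind {h})) \<in> RM q F"
    unfolding RM_lift[OF h(1) h(1)] using h by (simp add: piZ_zero wsq_zero)
  then show "(\<lambda>(h,\<alpha>). (lift v \<alpha> (ind {h}), lift v \<alpha> (ind {h}))) t \<in> R11d"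
    using te sumZ_lift[OF h(1)] by (simp add: R11d_def R1_def R2_def)
  show "val ((\<lambda>(h,\<alpha>). (lift v \<alpha> (ind {h}), lift v \<alpha> (ind {h}))) t) =
     (\<lambda>(h,\<alpha>). of_nat (Suc q * multinom q \<alpha> * (Suc q * multinom q \<alpha>)) * (z h * cnj (z h)) * (\<Prod>i\<in>UNIV. xc i ^ \<alpha> i)) t"
    using te val_lift[OF h(1) h(1), of \<alpha> \<alpha>] multinom_Suc[of \<alpha> q] h(2) by (simp add: G_at_0_diag)
next
  fix ab assume ab: "ab \<in> R11d"
  obtain a b where abe: "ab = (a,b)" by (cases ab)
  have ab2: "(a,b) \<in> R2" "sum a Z = 1" "sum b Z = 1" "a \<circ> v = b \<circ> v"
    using ab abe by (auto simp: R11d_def R1_def R2_def)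
  note shape = R2_lift[OF ab2(1)]
  obtain h where h: "suppZ a = {h}" using shape(5) ab2(2) by (auto simp: card_1_singleton_iff)
  obtain k where k: "suppZ b = {k}" using shape(6) ab2(3) by (auto simp: card_1_singleton_iff)
  have hk: "{h} \<subseteq> Z" "{k} \<subseteq> Z" using shape(3,4) h k by auto
  have "(lift v (a \<circ> v) (ind {h}), lift v (b \<circ> v) (ind {k})) \<in> RM q F" using shape(2) h k by simp
  then have eqs: "sum (a \<circ> v) UNIV = q" "piZ v (\<lambda>i. int (a (v i)) - int (b (v i))) + h - k = 0"
    unfolding RM_lift[OF hk] by simp_all
  moreover have "(\<lambda>i. int (a (v i)) - int (b (v i))) = (\<lambda>i. 0)"
    using ab2(4) by (auto simp: fun_eq_iff dest: fun_cong)
  ultimately have "h = k" by (simp add: piZ_zero)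
  then have "a = b" using shape(1) h k ab2(4) by (metis prod.inject)
  then show "(\<lambda>(h,\<alpha>). (lift v \<alpha> (ind {h}), lift v \<alpha> (ind {h}))) ((\<lambda>ab. (the_elem (suppZ (fst ab)), fst ab \<circ> v)) ab) = ab"
    using abe shape(1) h by simp
  show "(\<lambda>ab. (the_elem (suppZ (fst ab)), fst ab \<circ> v)) ab \<in> Z \<times> K q"
    using abe h hk eqs(1) by (simp add: K_def)
qed

lemma sum_R11d: "(\<Sum>ab\<in>R11d. val ab) = of_real (real ((q+1)^2) * Apoly q xi) * (\<Sum>k\<in>Z. z k * cnj (z k))"
proof -
  let ?c = "\<lambda>\<alpha>. of_nat (Suc q * multinom q \<alpha> * (Suc q * multinom q \<alpha>)) * (\<Prod>i\<in>UNIV. xc i ^ \<alpha> i)"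
  have "(\<Sum>ab\<in>R11d. val ab) = (\<Sum>(h,\<alpha>)\<in>Z \<times> K q. (z h * cnj (z h)) * ?c \<alpha>)"
    unfolding sum_R11d_pairs by (rule sum.cong) (auto simp: mult_ac)
  also have "\<dots> = (\<Sum>h\<in>Z. \<Sum>\<alpha>\<in>K q. (z h * cnj (z h)) * ?c \<alpha>)"
    by (rule sum.cartesian_product[symmetric])
  also have "\<dots> = (\<Sum>h\<in>Z. (z h * cnj (z h)) * (\<Sum>\<alpha>\<in>K q. ?c \<alpha>))"
    by (simp only: sum_distrib_left)
  also have "\<dots> = (\<Sum>k\<in>Z. z k * cnj (z k)) * (\<Sum>\<alpha>\<in>K q. ?c \<alpha>)"
    by (simp only: sum_distrib_right)
  also have "(\<Sum>\<alpha>\<in>K q. ?c \<alpha>) = of_real (real ((q+1)^2) * Apoly q xi)"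
    unfolding Apoly_def K_def of_real_mult of_real_sum sum_distrib_left
    by (rule sum.cong) (simp_all add: xc_def power2_eq_square algebra_simps)
  finally show ?thesis by (simp add: mult.commute)
qed

subsection \<open>Identification with the quadratic form \<open>Q\<close>\<close>

text \<open>Index sets of \<open>Q\<close> with the coefficients \<open>c(l)\<close> expanded into their sums over \<open>a\<close>, and
  the support of \<open>z\<close> built into the pair sets.\<close>
definition "A0 l = {a::'m \<Rightarrow> nat. (\<Sum>i\<in>UNIV. a i + posp l i) = q}"
definition "A2 l = {a::'m \<Rightarrow> nat. (\<Sum>i\<in>UNIV. a i + posp l i) = q - 1}"
definition "P0Z l = P0 v l \<inter> (Z \<times> Z)"
definition "P2Z l = {p \<in> P2 v l. p \<subseteq> Z}"
definition "W0 = (SIGMA l:Xq0 q. SIGMA a:A0 l. P0Z l)"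
definition "W2 = (SIGMA l:Xq2 q. SIGMA a:A2 l. P2Z l)"
definition "M0 l a = real ((q+1)^2) * xihalf xi l * (real (multinom q (\<lambda>i. posp l i + a i))
    * real (multinom q (\<lambda>i. negp l i + a i)) * (\<Prod>i\<in>UNIV. xi i ^ a i))"
definition "M2 l a = real ((q+1)*q) * xihalf xi l * (real (multinom (q+1) (\<lambda>i. negp l i + a i))
    * real (multinom (q-1) (\<lambda>i. posp l i + a i)) * (\<Prod>i\<in>UNIV. xi i ^ a i))"

lemma finite_A: "finite (A0 l)" "finite (A2 l)"
proof -
  have bound: "a i \<le> (\<Sum>j\<in>UNIV. a j + posp l j)" for a :: "'m \<Rightarrow> nat" and i
    by (rule order_trans[OF le_add1 member_le_sum[of i UNIV "\<lambda>j. a j + posp l j"]]) simp_all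
  then have "A0 l \<subseteq> {a. \<forall>i. a i \<le> q}" "A2 l \<subseteq> {a. \<forall>i. a i \<le> q - 1}"
    by (auto simp: A0_def A2_def) (metis bound)
  then show "finite (A0 l)" "finite (A2 l)"
    using finite_subset finite_bounded_multi_indices by blast+
qed

lemma finite_PZ: "finite (P0Z l)" "finite (P2Z l)"
  using finite_Z by (auto simp: P0Z_def P2Z_def intro: finite_subset[of _ "Z \<times> Z"] finite_subset[of _ "Pow Z"])

lemma Qform_split: "Qform q v xi x z =
   (\<Sum>(l,a,hk)\<in>W0. of_real (M0 l a) * cis (lx l x) * (z (fst hk) * cnj (z (snd hk))))
 + (\<Sum>(l,a,p)\<in>W2. of_real (M2 l a) * (cis (lx l x) * (\<Prod>h\<in>p. z h)))
 + (\<Sum>(l,a,p)\<in>W2. of_real (M2 l a) * (cis (- lx l x) * (\<Prod>h\<in>p. cnj (z h))))"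
proof -
  have fin: "finite (Xq0 q :: ('m \<Rightarrow> int) set)" "finite (Xq2 q :: ('m \<Rightarrow> int) set)"
    using finite_Xq[of q] by (auto simp: Xq0_def Xq2_def)
  have c0: "c0 q xi l = (\<Sum>a\<in>A0 l. M0 l a)" and c2: "c2 q xi l = (\<Sum>a\<in>A2 l. M2 l a)" for l
    unfolding c0_def M0_def A0_def c2_def M2_def A2_def by (simp_all add: sum_distrib_left)
  have part0: "(\<Sum>l\<in>Xq0 q. of_real (c0 q xi l) * cis (lx l x) *
        (\<Sum>(h,k)\<in>P0 v l \<inter> ({k. z k \<noteq> 0} \<times> {k. z k \<noteq> 0}). z h * cnj (z k))) =
      (\<Sum>(l,a,hk)\<in>W0. of_real (M0 l a) * cis (lx l x) * (z (fst hk) * cnj (z (snd hk))))"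
  proof -
    have "(\<Sum>l\<in>Xq0 q. of_real (c0 q xi l) * cis (lx l x) *
        (\<Sum>(h,k)\<in>P0 v l \<inter> ({k. z k \<noteq> 0} \<times> {k. z k \<noteq> 0}). z h * cnj (z k))) =
      (\<Sum>l\<in>Xq0 q. \<Sum>a\<in>A0 l. \<Sum>hk\<in>P0Z l. of_real (M0 l a) * cis (lx l x) * (z (fst hk) * cnj (z (snd hk))))"
      unfolding c0 of_real_sum sum_distrib_right P0Z_def Z_def
      by (simp add: sum_distrib_left case_prod_unfold)
    also have "\<dots> = (\<Sum>(l,a,hk)\<in>W0. of_real (M0 l a) * cis (lx l x) * (z (fst hk) * cnj (z (snd hk))))"
      unfolding W0_def by (rule sum_triple_Sigma) (auto simp: fin finite_A finite_PZ)
    finally show ?thesis .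
  qed
  have part2: "of_real (c2 q xi l) * (\<Sum>p\<in>{p\<in>P2 v l. p \<subseteq> {k. z k \<noteq> 0}}.
            cis (lx l x) * (\<Prod>h\<in>p. z h) + cis (- lx l x) * (\<Prod>h\<in>p. cnj (z h))) =
      (\<Sum>a\<in>A2 l. \<Sum>p\<in>P2Z l. of_real (M2 l a) * (cis (lx l x) * (\<Prod>h\<in>p. z h))) +
      (\<Sum>a\<in>A2 l. \<Sum>p\<in>P2Z l. of_real (M2 l a) * (cis (- lx l x) * (\<Prod>h\<in>p. cnj (z h))))" for l
    unfolding c2 of_real_sum sum_distrib_right P2Z_def Z_def
    by (simp add: sum_distrib_left algebra_simps sum.distrib)
  have triple: "(\<Sum>l\<in>Xq2 q. \<Sum>a\<in>A2 l. \<Sum>p\<in>P2Z l. g l a p) = (\<Sum>(l,a,p)\<in>W2. g l a p)"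
    for g :: "_ \<Rightarrow> _ \<Rightarrow> _ \<Rightarrow> complex"
    unfolding W2_def by (rule sum_triple_Sigma) (auto simp: fin finite_A finite_PZ)
  show ?thesis
    unfolding Qform_def part0 part2 unfolding sum.distrib triple by (simp add: add.assoc)
qed

lemma W0_to_R11o:
  assumes t: "(l, a, (h, k)) \<in> W0"
  shows "pair_of l a {h} {k} \<in> R11o"
    "val (pair_of l a {h} {k}) = of_real (M0 l a) * cis (lx l x) * (z h * cnj (z k))"
proof -
  have l: "eta l = 0" "l \<noteq> (\<lambda>i. 0)" using t by (auto simp: W0_def Xq0_def Xq_def)
  have a: "sum (\<lambda>i. posp l i + a i) UNIV = q" using t by (simp add: W0_def A0_def add.commute)
  then have b: "sum (\<lambda>i. negp l i + a i) UNIV = q" using sum_negp_shift[of l a] l(1) by (simp del: of_nat_sum)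
  have hk: "{h} \<subseteq> Z" "{k} \<subseteq> Z" "piZ v l + h - k = 0" "wsq v l + nsq h - nsq k = 0"
    using t by (auto simp: W0_def P0Z_def P0_def)
  have "(\<lambda>i. posp l i + a i) \<noteq> (\<lambda>i. negp l i + a i)"
  proof
    assume "(\<lambda>i. posp l i + a i) = (\<lambda>i. negp l i + a i)"
    then show False using posp_negp_shift[of l a] l(2) by (metis diff_self)
  qed
  moreover have "pair_of l a {h} {k} \<in> RM q F" unfolding pair_of_RM[OF hk(1,2)] using a b hk by simp
  ultimately show "pair_of l a {h} {k} \<in> R11o"
    using sumZ_lift[OF hk(1)] sumZ_lift[OF hk(2)] by (simp add: R11o_def R1_def R2_def pair_of_def)
  have "multinom (q+1) (\<lambda>i. posp l i + a i) = (q+1) * multinom q (\<lambda>i. posp l i + a i)"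
    "multinom (q+1) (\<lambda>i. negp l i + a i) = (q+1) * multinom q (\<lambda>i. negp l i + a i)"
    using multinom_Suc[of "\<lambda>i. posp l i + a i" q] multinom_Suc[of "\<lambda>i. negp l i + a i" q] a b by simp_all
  then show "val (pair_of l a {h} {k}) = of_real (M0 l a) * cis (lx l x) * (z h * cnj (z k))"
    using val_pair_of[OF hk(1,2), of l a] by (simp add: M0_def algebra_simps power2_eq_square)
qed

lemma R11o_to_W0:
  assumes ab: "ab \<in> R11o"
  obtains l a h k where "(l, a, (h, k)) \<in> W0" "ab = pair_of l a {h} {k}"
proof -
  obtain A B where abe: "ab = (A,B)" by (cases ab)
  have ab2: "(A,B) \<in> R2" "sum A Z = 1" "sum B Z = 1" "A \<circ> v \<noteq> B \<circ> v"
    using ab abe by (auto simp: R11o_def R1_def R2_def)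
  note shape = R2_lift[OF ab2(1)]
  obtain h where h: "suppZ A = {h}" using shape(5) ab2(2) by (auto simp: card_1_singleton_iff)
  obtain k where k: "suppZ B = {k}" using shape(6) ab2(3) by (auto simp: card_1_singleton_iff)
  have hk: "{h} \<subseteq> Z" "{k} \<subseteq> Z" using shape(3,4) h k by auto
  define \<alpha> where "\<alpha> = A \<circ> v"
  define \<beta> where "\<beta> = B \<circ> v"
  define l where "l = (\<lambda>i. int (\<alpha> i) - int (\<beta> i))"
  have "(lift v \<alpha> (ind {h}), lift v \<beta> (ind {k})) \<in> RM q F" using shape(2) h k by (simp add: \<alpha>_def \<beta>_def)
  then have eqs: "sum \<alpha> UNIV = q" "sum \<beta> UNIV = q" "piZ v l + h - k = 0" "wsq v l + nsq h - nsq k = 0"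
    unfolding RM_lift[OF hk] l_def by simp_all
  have "pair_of l (\<lambda>i. min (\<alpha> i) (\<beta> i)) {h} {k} = ab"
    unfolding l_def pair_of_lift unfolding \<alpha>_def \<beta>_def using shape(1) h k abe by (simp add: comp_def)
  moreover have eta: "eta l = 0" unfolding l_def eta_diff using eqs by simp
  have "l \<in> Xq q"
  proof (rule in_Xq[OF _ l_def])
    show "sum \<alpha> UNIV + sum \<beta> UNIV = 2 * q" using eqs by simp
    show "l \<noteq> (\<lambda>i. 0)" using ab2(4) by (auto simp: l_def \<alpha>_def \<beta>_def fun_eq_iff)
    show "\<forall>i. l \<noteq> (\<lambda>j. if j = i then -2 else 0)"
    proof (intro allI notI)
      fix i assume "l = (\<lambda>j. if j = i then -2 else 0)"
      then show False using eta eta_single[of i "-2"] by simp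
    qed
  qed (use eta in simp)
  moreover have "(\<lambda>i. min (\<alpha> i) (\<beta> i)) \<in> A0 l"
    using sum_min_posp[OF l_def] eqs(1) unfolding A0_def by simp
  moreover have "(h, k) \<in> P0Z l" using hk eqs Z_Sc unfolding P0Z_def P0_def by auto
  ultimately show ?thesis using eta that[of l "\<lambda>i. min (\<alpha> i) (\<beta> i)" h k] by (simp add: W0_def Xq0_def)
qed

lemma sum_R11o: "(\<Sum>(l,a,hk)\<in>W0. of_real (M0 l a) * cis (lx l x) * (z (fst hk) * cnj (z (snd hk))))
    = (\<Sum>ab\<in>R11o. val ab)"
proof -
  let ?j = "\<lambda>(l,a,hk). pair_of l a {fst hk} {snd hk}"
  have inj: "inj_on ?j W0"
  proof (rule inj_onI)
    fix t t' assume t: "t \<in> W0" "t' \<in> W0" and eq: "?j t = ?j t'"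
    obtain l a h k l' a' h' k' where te: "t = (l,a,(h,k))" "t' = (l',a',(h',k'))" by (metis prod.exhaust)
    have Z: "{h} \<subseteq> Z" "{k} \<subseteq> Z" "{h'} \<subseteq> Z" "{k'} \<subseteq> Z" using t te by (auto simp: W0_def P0Z_def)
    have "pair_of l a {h} {k} = pair_of l' a' {h'} {k'}" using eq te by simp
    then have "decode (pair_of l a {h} {k}) = decode (pair_of l' a' {h'} {k'})"
      "suppZ (fst (pair_of l a {h} {k})) = suppZ (fst (pair_of l' a' {h'} {k'}))"
      "suppZ (snd (pair_of l a {h} {k})) = suppZ (snd (pair_of l' a' {h'} {k'}))" by simp_all
    then show "t = t'"
      unfolding te decode_pair_of by (simp add: pair_of_def suppZ_lift[OF Z(1)] suppZ_lift[OF Z(2)]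
          suppZ_lift[OF Z(3)] suppZ_lift[OF Z(4)])
  qed
  moreover have img: "?j ` W0 = R11o"
  proof
    show "?j ` W0 \<subseteq> R11o"
    proof
      fix ab assume "ab \<in> ?j ` W0"
      then obtain l a h k where "(l, a, (h, k)) \<in> W0" "ab = pair_of l a {h} {k}" by auto
      then show "ab \<in> R11o" using W0_to_R11o(1) by simp
    qed
    show "R11o \<subseteq> ?j ` W0"
    proof
      fix ab assume "ab \<in> R11o"
      then obtain l a h k where "(l, a, (h, k)) \<in> W0" "ab = pair_of l a {h} {k}" by (rule R11o_to_W0)
      then show "ab \<in> ?j ` W0" by (intro rev_image_eqI[of "(l, a, (h, k))"]) simp_all
    qed
  qed
  ultimately have "(\<Sum>ab\<in>R11o. val ab) = (\<Sum>t\<in>W0. val (?j t))"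
    using sum.reindex[of ?j W0 val] by (simp add: o_def)
  also have "\<dots> = (\<Sum>(l,a,hk)\<in>W0. of_real (M0 l a) * cis (lx l x) * (z (fst hk) * cnj (z (snd hk))))"
  proof (rule sum.cong[OF refl])
    fix t assume "t \<in> W0"
    moreover obtain l a h k where "t = (l, a, (h, k))" by (metis prod.exhaust)
    ultimately show "val (?j t) = (\<lambda>(l,a,hk). of_real (M0 l a) * cis (lx l x) * (z (fst hk) * cnj (z (snd hk)))) t" by (simp add: W0_to_R11o(2))
  qed
  finally show ?thesis ..
qed

lemma W2_to_R20:
  assumes t: "(l, a, p) \<in> W2"
  shows "pair_of l a p {} \<in> R20"
    "val (pair_of l a p {}) = of_real (M2 l a) * (cis (lx l x) * (\<Prod>h\<in>p. z h))"
proof -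
  have l: "eta l = -2" using t by (simp add: W2_def Xq2_def)
  have a: "sum (\<lambda>i. posp l i + a i) UNIV = q - 1" using t by (simp add: W2_def A2_def add.commute)
  have "int (sum (\<lambda>i. negp l i + a i) UNIV) = int (q + 1)"
    using sum_negp_shift[of l a] l a q_pos by (simp del: of_nat_sum add: of_nat_diff)
  then have b: "sum (\<lambda>i. negp l i + a i) UNIV = q + 1" by (simp only: of_nat_eq_iff)
  obtain h k where hk: "p = {h,k}" "h \<noteq> k" "{h,k} \<subseteq> Z" "piZ v l + h + k = 0" "wsq v l + nsq h + nsq k = 0"
    using t by (auto simp: W2_def P2Z_def P2_def)
  have pZ: "p \<subseteq> Z" using hk by simp
  have "pair_of l a p {} \<in> RM q F"
    unfolding pair_of_RM[OF pZ empty_subsetI] using a b hk q_pos by (simp add: add.assoc)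
  then show "pair_of l a p {} \<in> R20"
    using sumZ_lift[OF pZ] sumZ_lift[OF empty_subsetI] hk by (simp add: R20_def R2_def pair_of_def)
  have qq: "Suc (q - 1) = q" using q_pos by simp
  have "multinom (q+1) (\<lambda>i. posp l i + a i) = (q+1) * (q * multinom (q-1) (\<lambda>i. posp l i + a i))"
    using multinom_Suc[of "\<lambda>i. posp l i + a i" "Suc (q-1)"] multinom_Suc[of "\<lambda>i. posp l i + a i" "q-1"] a
    unfolding qq by simp
  then show "val (pair_of l a p {}) = of_real (M2 l a) * (cis (lx l x) * (\<Prod>h\<in>p. z h))"
    using val_pair_of[OF pZ empty_subsetI, of l a] by (simp add: M2_def algebra_simps)
qed

text \<open>Conversely every monomial \<open>z_h z_k\<close> arises in this way; hypothesis (4) guarantees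
  \<open>h \<noteq> k\<close> (lemma \<open>no_square\<close>), and the parallelogram law gives \<open>l \<noteq> -2 e_i\<close>.\<close>
lemma R20_to_W2:
  assumes ab: "ab \<in> R20"
  obtains l a p where "(l, a, p) \<in> W2" "ab = pair_of l a p {}"
proof -
  obtain A B where abe: "ab = (A,B)" by (cases ab)
  have ab2: "(A,B) \<in> R2" "sum A Z = 2" "sum B Z = 0" using ab abe by (auto simp: R20_def R2_def)
  note shape = R2_lift[OF ab2(1)]
  obtain h k where hk: "suppZ A = {h,k}" "h \<noteq> k" using shape(5) ab2(2) by (auto simp: card_2_iff)
  have B0: "suppZ B = {}" using shape(4,6) ab2(3) finite_Z by (auto simp: finite_subset card_eq_0_iff)
  have pZ: "{h,k} \<subseteq> Z" using shape(3) hk by simp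
  define \<alpha> where "\<alpha> = A \<circ> v"
  define \<beta> where "\<beta> = B \<circ> v"
  define l where "l = (\<lambda>i. int (\<alpha> i) - int (\<beta> i))"
  have "(lift v \<alpha> (ind {h,k}), lift v \<beta> (ind {})) \<in> RM q F"
    using shape(2) hk(1) B0 by (simp add: \<alpha>_def \<beta>_def)
  then have eqs: "sum \<alpha> UNIV + 2 = q + 1" "sum \<beta> UNIV = q + 1" "piZ v l + (h + k) = 0" "wsq v l + (nsq h + nsq k) = 0"
    unfolding RM_lift[OF pZ empty_subsetI] l_def using hk(2) by (simp_all add: add.assoc)
  have "pair_of l (\<lambda>i. min (\<alpha> i) (\<beta> i)) {h,k} {} = ab"
    unfolding l_def pair_of_lift unfolding \<alpha>_def \<beta>_def using shape(1) hk(1) B0 abe by (simp add: comp_def)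
  moreover have "int (sum \<alpha> UNIV) = int q - 1" "int (sum \<beta> UNIV) = int q + 1" using eqs(1,2) by linarith+
  then have eta: "eta l = -2" unfolding l_def eta_diff by simp
  have "l \<in> Xq q"
  proof (rule in_Xq[OF _ l_def])
    show "sum \<alpha> UNIV + sum \<beta> UNIV = 2 * q" using eqs by simp
    show "l \<noteq> (\<lambda>i. 0)" using eta by (auto simp: eta_def)
    show "\<forall>i. l \<noteq> (\<lambda>j. if j = i then -2 else 0)"
      using not_minus_two_unit[OF hk(2), of v l] eqs by (simp add: add.assoc)
  qed (use eta in simp)
  moreover have "(\<lambda>i. min (\<alpha> i) (\<beta> i)) \<in> A2 l"
    using sum_min_posp[OF l_def] eqs(1) unfolding A2_def by simp
  moreover have "{h,k} \<in> P2Z l"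
    using pZ hk(2) eqs Z_Sc unfolding P2Z_def P2_def by (blast intro: add.assoc[THEN trans])
  ultimately show ?thesis using eta that[of l "\<lambda>i. min (\<alpha> i) (\<beta> i)" "{h,k}"] by (simp add: W2_def Xq2_def)
qed

lemma sum_R20: "(\<Sum>(l,a,p)\<in>W2. of_real (M2 l a) * (cis (lx l x) * (\<Prod>h\<in>p. z h))) = (\<Sum>ab\<in>R20. val ab)"
proof -
  let ?j = "\<lambda>(l,a,p). pair_of l a p {}"
  have inj: "inj_on ?j W2"
  proof (rule inj_onI)
    fix t t' assume t: "t \<in> W2" "t' \<in> W2" and eq: "?j t = ?j t'"
    obtain l a p l' a' p' where te: "t = (l,a,p)" "t' = (l',a',p')" by (metis prod.exhaust)
    have Z: "p \<subseteq> Z" "p' \<subseteq> Z" using t te by (auto simp: W2_def P2Z_def)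
    have "pair_of l a p {} = pair_of l' a' p' {}" using eq te by simp
    then have "decode (pair_of l a p {}) = decode (pair_of l' a' p' {})"
      "suppZ (fst (pair_of l a p {})) = suppZ (fst (pair_of l' a' p' {}))" by simp_all
    then show "t = t'"
      unfolding te decode_pair_of by (simp add: pair_of_def suppZ_lift[OF Z(1)] suppZ_lift[OF Z(2)])
  qed
  moreover have img: "?j ` W2 = R20"
  proof
    show "?j ` W2 \<subseteq> R20"
    proof
      fix ab assume "ab \<in> ?j ` W2"
      then obtain l a p where "(l, a, p) \<in> W2" "ab = pair_of l a p {}" by auto
      then show "ab \<in> R20" using W2_to_R20(1) by simp
    qed
    show "R20 \<subseteq> ?j ` W2"
    proof
      fix ab assume "ab \<in> R20"
      then obtain l a p where "(l, a, p) \<in> W2" "ab = pair_of l a p {}" by (rule R20_to_W2)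
      then show "ab \<in> ?j ` W2" by (intro rev_image_eqI[of "(l, a, p)"]) simp_all
    qed
  qed
  ultimately have "(\<Sum>ab\<in>R20. val ab) = (\<Sum>t\<in>W2. val (?j t))"
    using sum.reindex[of ?j W2 val] by (simp add: o_def)
  also have "\<dots> = (\<Sum>(l,a,p)\<in>W2. of_real (M2 l a) * (cis (lx l x) * (\<Prod>h\<in>p. z h)))"
  proof (rule sum.cong[OF refl])
    fix t assume "t \<in> W2"
    moreover obtain l a p where "t = (l, a, p)" by (metis prod.exhaust)
    ultimately show "val (?j t) = (\<lambda>(l,a,p). of_real (M2 l a) * (cis (lx l x) * (\<Prod>h\<in>p. z h))) t" by (simp add: W2_to_R20(2))
  qed
  finally show ?thesis ..
qed

lemma sum_R2:
  "(\<Sum>ab\<in>R2. val ab) = of_real (real ((q+1)^2) * Apoly q xi) * (\<Sum>k\<in>Z. z k * cnj (z k)) + Qform q v xi x z"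
proof -
  have "(\<Sum>(l,a,p)\<in>W2. of_real (M2 l a) * (cis (- lx l x) * (\<Prod>h\<in>p. cnj (z h))))
      = cnj (\<Sum>(l,a,p)\<in>W2. of_real (M2 l a) * (cis (lx l x) * (\<Prod>h\<in>p. z h)))"
    by (simp add: case_prod_unfold cis_cnj)
  then show ?thesis
    unfolding R2_split sum_R11d Qform_split sum_R11o sum_R02 sum_R20[symmetric] by (simp add: add.assoc)
qed

lemma deriv_Apoly: "deriv (\<lambda>t. Apoly (q+1) (xi(i := t))) (xi i) =
   (\<Sum>\<alpha>\<in>K (q+1). real (multinom (q+1) \<alpha>)^2 * (real (\<alpha> i) * xi i ^ (\<alpha> i - 1) * (\<Prod>j\<in>UNIV-{i}. xi j ^ \<alpha> j)))"
proof -
  have "(\<Prod>j\<in>UNIV. (xi(i := t)) j ^ \<alpha> j) = t ^ \<alpha> i * (\<Prod>j\<in>UNIV-{i}. xi j ^ \<alpha> j)" for \<alpha> :: "'m \<Rightarrow> nat" and t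
    by (subst prod.remove[of _ i]) (auto intro!: prod.cong)
  then have "Apoly (q+1) (xi(i := t)) = (\<Sum>\<alpha>\<in>K (q+1). real (multinom (q+1) \<alpha>)^2 * (t ^ \<alpha> i * (\<Prod>j\<in>UNIV-{i}. xi j ^ \<alpha> j)))" for t
    unfolding Apoly_def K_def by simp
  then have "((\<lambda>t. Apoly (q+1) (xi(i := t))) has_real_derivative
     (\<Sum>\<alpha>\<in>K (q+1). real (multinom (q+1) \<alpha>)^2 * (real (\<alpha> i) * xi i ^ (\<alpha> i - 1) * (\<Prod>j\<in>UNIV-{i}. xi j ^ \<alpha> j)))) (at (xi i))"
    by (auto intro!: derivative_eq_intros simp: mult_ac)
  then show ?thesis by (rule DERIV_imp_deriv)
qed

lemma second_derivative_Apoly: "(\<Sum>\<alpha>\<in>K (q+1). of_nat (multinom (q+1) \<alpha> ^ 2) *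
       (\<Sum>i\<in>UNIV. (of_nat (\<alpha> i) * xc i ^ (\<alpha> i - 1) * (2 * y i)) * (\<Prod>j\<in>UNIV-{i}. xc j ^ \<alpha> j)))
   = 2 * (\<Sum>i\<in>UNIV. of_real (deriv (\<lambda>t. Apoly (q+1) (xi(i := t))) (xi i)) * y i)"
proof -
  have "(\<Sum>i\<in>UNIV. of_real (deriv (\<lambda>t. Apoly (q+1) (xi(i := t))) (xi i)) * y i) =
    (\<Sum>i\<in>UNIV. \<Sum>\<alpha>\<in>K (q+1). of_nat (multinom (q+1) \<alpha> ^ 2) *
       ((of_nat (\<alpha> i) * xc i ^ (\<alpha> i - 1) * y i) * (\<Prod>j\<in>UNIV-{i}. xc j ^ \<alpha> j)))"
    unfolding deriv_Apoly by (simp add: sum_distrib_right sum_distrib_left xc_def mult_ac)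
  also have "\<dots> = (\<Sum>\<alpha>\<in>K (q+1). \<Sum>i\<in>UNIV. of_nat (multinom (q+1) \<alpha> ^ 2) *
       ((of_nat (\<alpha> i) * xc i ^ (\<alpha> i - 1) * y i) * (\<Prod>j\<in>UNIV-{i}. xc j ^ \<alpha> j)))"
    by (rule sum.swap)
  finally show ?thesis by (simp add: sum_distrib_left mult_ac)
qed

lemma second_order_expansion:
  "let f = Hsub q v xi x y z; Z = {k. z k \<noteq> 0}
   in deriv f 0 = 0
    \<and> f 0 + deriv f 0 + (deriv ^^ 2) f 0 / 2 =
        of_real ((\<lambda>xi. (\<Sum>i\<in>UNIV. real_of_int (nsq (v i)) * xi i) + Apoly (q+1) xi) xi)
      + of_real (real ((q+1)^2) * Apoly q xi) * ((\<Sum>i\<in>UNIV. y i) + (\<Sum>k\<in>Z. z k * cnj (z k)))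
      + (\<Sum>i\<in>UNIV. of_real (omega q v xi i) * y i)
      + (\<Sum>k\<in>Z. of_int (nsq k) * z k * cnj (z k))
      + Qform q v xi x z"
proof -
  let ?f = "Hsub q v xi x y z"
  let ?A = "of_real (real ((q+1)^2) * Apoly q xi) :: complex"
  let ?D = "(\<Sum>i\<in>UNIV. of_real (deriv (\<lambda>t. Apoly (q+1) (xi(i := t))) (xi i)) * y i) :: complex"
  let ?N = "(\<Sum>i\<in>UNIV. of_int (nsq (v i)) * y i) :: complex"
  let ?W = "(\<Sum>k\<in>Z. of_int (nsq k) * (z k * cnj (z k))) :: complex"
  note jet = has_jet2_values[OF has_jet2_Hsub]
  have at_zero: "?f 0 = of_real ((\<Sum>i\<in>UNIV. real_of_int (nsq (v i)) * xi i) + Apoly (q+1) xi)"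
    unfolding jet(1) Apoly_def K_def by (simp add: xc_def)
  have "(\<Sum>i\<in>UNIV. of_int (nsq (v i)) * (2 * y i)) = 2 * ?N" by (simp add: sum_distrib_left mult_ac)
  then have second: "(deriv ^^ 2) ?f 0 / 2 = ?N + ?W + ?D + ?A * (\<Sum>k\<in>Z. z k * cnj (z k)) + Qform q v xi x z"
    unfolding jet(3) second_derivative_Apoly sum_R2 by (simp add: field_simps)
  have "(\<Sum>i\<in>UNIV. of_real (omega q v xi i) * y i) = (\<Sum>i\<in>UNIV. of_int (nsq (v i)) * y i
       + of_real (deriv (\<lambda>t. Apoly (q+1) (xi(i := t))) (xi i)) * y i - ?A * y i)"
    unfolding omega_def by (simp add: algebra_simps)
  then have omega_sum: "(\<Sum>i\<in>UNIV. of_real (omega q v xi i) * y i) = ?N + ?D - ?A * (\<Sum>i\<in>UNIV. y i)"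
    by (simp add: sum.distrib sum_subtractf sum_distrib_left)
  show ?thesis unfolding Let_def Z_def[symmetric] jet(2) at_zero omega_sum
    using second by (simp add: algebra_simps)
qed

end

theorem mainTheorem5:
  fixes v :: "'m::finite \<Rightarrow> int^'n" and q :: nat
  assumes q1: "q \<ge> 1"
    and dist: "inj v"
    and H1: "\<forall>nn::'m \<Rightarrow> int. (\<Sum>i\<in>UNIV. nn i) = 0 \<and> 1 < (\<Sum>i\<in>UNIV. \<bar>nn i\<bar>)
               \<and> (\<Sum>i\<in>UNIV. \<bar>nn i\<bar>) \<le> 2*int q + 2 \<longrightarrow> piZ v nn \<noteq> 0"
    and H2: "\<forall>nn::'m \<Rightarrow> int. (\<Sum>i\<in>UNIV. nn i) = 1 \<and> 1 < (\<Sum>i\<in>UNIV. \<bar>nn i\<bar>)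
               \<and> (\<Sum>i\<in>UNIV. \<bar>nn i\<bar>) \<le> 2*int q + 1 \<longrightarrow> nsq (piZ v nn) - wsq v nn \<noteq> 0"
    and H3: "\<forall>u::'m \<Rightarrow> int. (u \<in> Xq q \<or> (\<exists>a\<in>Xq q. \<exists>b\<in>Xq q. a \<noteq> b \<and> (u = (\<lambda>i. a i + b i) \<or> u = (\<lambda>i. a i - b i))))
               \<longrightarrow> piZ v u \<noteq> 0"
    and H4: "\<forall>l\<in>Xq2 q. 2 * wsq v l + nsq (piZ v l) \<noteq> 0"
  shows "\<exists>C :: ('m \<Rightarrow> real) \<Rightarrow> real.
    \<forall>xi x y z. (\<forall>i. xi i > 0) \<and> (\<forall>i. norm (y i) < xi i)
      \<and> finite {k. z k \<noteq> 0} \<and> {k. z k \<noteq> 0} \<subseteq> Sc v \<longrightarrow>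
      (let f = Hsub q v xi x y z;
           Z = {k. z k \<noteq> 0}
       in deriv f 0 = 0
        \<and> f 0 + deriv f 0 + (deriv ^^ 2) f 0 / 2 =
            of_real (C xi)
          + of_real (real ((q+1)^2) * Apoly q xi) * ((\<Sum>i\<in>UNIV. y i) + (\<Sum>k\<in>Z. z k * cnj (z k)))
          + (\<Sum>i\<in>UNIV. of_real (omega q v xi i) * y i)
          + (\<Sum>k\<in>Z. of_int (nsq k) * z k * cnj (z k))
          + Qform q v xi x z)"
proof (intro exI[of _ "\<lambda>xi. (\<Sum>i\<in>UNIV. real_of_int (nsq (v i)) * xi i) + Apoly (q+1) xi"] allI impI)
  fix xi x :: "'m \<Rightarrow> real" and y :: "'m \<Rightarrow> complex" and z :: "int^'n \<Rightarrow> complex"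
  assume "(\<forall>i. xi i > 0) \<and> (\<forall>i. norm (y i) < xi i) \<and> finite {k. z k \<noteq> 0} \<and> {k. z k \<noteq> 0} \<subseteq> Sc v"
  then interpret truncation v q xi x y z
    using q1 dist H1 H2 H4 by unfold_locales auto
  show "let f = Hsub q v xi x y z; Z = {k. z k \<noteq> 0}
     in deriv f 0 = 0
      \<and> f 0 + deriv f 0 + (deriv ^^ 2) f 0 / 2 =
          of_real ((\<lambda>xi. (\<Sum>i\<in>UNIV. real_of_int (nsq (v i)) * xi i) + Apoly (q+1) xi) xi)
        + of_real (real ((q+1)^2) * Apoly q xi) * ((\<Sum>i\<in>UNIV. y i) + (\<Sum>k\<in>Z. z k * cnj (z k)))
        + (\<Sum>i\<in>UNIV. of_real (omega q v xi i) * y i)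
        + (\<Sum>k\<in>Z. of_int (nsq k) * z k * cnj (z k))
        + Qform q v xi x z"
    by (rule second_order_expansion)
qed

end
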